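(* Under the standing assumptions below, for every $x\in\mathcal X$, $s\in\mathcal S$ and $\gamma\in\mathbb R^I_+$, the dual value function satisfies $$D(\gamma,x,s)=\inf_{\lambda\in\mathbb R^I_+}\ \sup_{a\in\tilde{\mathcal A}(x,s)}\Big[r(x,a,s)+\sum_{i=1}^I\big(\gamma^ig^i(x,a,s)+\lambda^i(g^i(x,a,s)-\bar g^i)\big)+\beta\,\mathbb E_s D(\gamma+\lambda,x',s')\Big],$$ where $x'=\zeta(x,a,s)$ and $\mathbb E_s$ is expectation over $s'\sim\pi(\cdot|s)$.
   Context: Setup. Let $\mathcal S$ be a finite set and $(s_t)_{t\ge0}$ a Markov chain on $\mathcal S$ with transition probabilities $\pi(s'|s)>0$ for all $s,s'\in\mathcal S$; for a shock history $s^t=(s_0,\dots,s_t)\in\mathcal S^{t+1}$ write $\pi^t(s^t|s_0)$ for its probability given $s_0$, and $\mathbb E_{s_t}$ (equivalently $\mathbb E_{s^t}$) for expectation over future shocks conditional on the history $s^t$. Let $\mathcal A\subset\mathbb R^n$ be a finite set, $\mathcal X\subseteq\mathbb R^m$ a countable set, $\zeta:\mathcal X\times\mathcal A\times\mathcal S\to\mathcal X$, $p:\mathcal X\times\mathcal A\times\mathcal S\to\mathbb R$, $r,g^1,\dots,g^I:\mathcal X\times\mathcal A\times\mathcal S\to\mathbb R$ bounded functions, $\bar g^1,\dots,\bar g^I\in\mathbb R$ constants and $\beta\in(0,1)$. A plan is a family $a=(a(s^t))_{t\ge0,\,s^t\in\mathcal S^{t+1}}$ with $a(s^t)\in\mathcal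 A$; given $x_0\in\mathcal X$ it induces states $x(s^0)=x_0$, $x(s^{t+1})=\zeta(x(s^t),a(s^t),s_t)$. Let $\tilde{\mathcal A}(x,s)=\{a\in\mathcal A:p(x,a,s)\ge0\}$ and let $\tilde{\mathcal A}^\infty(x_0)$ be the set of plans with $a(s^t)\in\tilde{\mathcal A}(x(s^t),s_t)$ for all $t,s^t$. A plan is feasible for $(x_0,s_0)$ if it lies in $\tilde{\mathcal A}^\infty(x_0)$ and satisfies the forward-looking constraints $\mathbb E_{s_t}\sum_{n=0}^\infty\beta^ng^i(x(s^{t+n}),a(s^{t+n}),s_{t+n})\ge\bar g^i$ for all $t$, $s^t$, $i$. Standing assumption: for every $x_0\in\mathcal X$, $s_0\in\mathcal S$ a feasible plan exists. Pre-action histories: $\mathcal H^t=\mathcal S^{t+1}\times\mathcal A^t$ with elements $h^t=(s_0,a_0,\dots,s_{t-1},a_{t-1},s_t)$; along $s^t$ a plan generates the history $h^t=(s_0,a(s^0),\dots,s_{t-1},a(s^{t-1}),s_t)$. Dual value function. $\Lambda$ is the set of families $(\lambda^i(h^t))_{t\ge0,h^t\in\mathcal H^t,1\le i\le I}$ with $\lambda^i(h^t)\ge0$ and $\sum_t\sum_{h^t}\sum_i\beta^t\lambda^i(h^t)\pi^t(s^t|s_0)<\infty$ ($s^t$ the shock history in $h^t$). For $\gamma\in\mathbb R^I_+$ the Lagrangian is $L(a,\lambda;\gamma,x_0,s_0)=\mathbb E_{s_0}\sum_{t\ge0}\beta^t\Big[r(x(s^t),a(s^t),s_t)+\sum_i\gamma^ig^i(x(s^t),a(s^t),s_t)+\sum_i\lambda^i(h^t)\Big(\sum_{n\ge0}\beta^ng^i(x(s^{t+n}),a(s^{t+n}),s_{t+n})-\bar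 g^i\Big)\Big]$, with $h^t$ the history generated by the plan, and $D(\gamma,x_0,s_0)=\inf_{\lambda\in\Lambda}\sup_{a\in\tilde{\mathcal A}^\infty(x_0)}L(a,\lambda;\gamma,x_0,s_0)$. *)

theory Defs
  imports "HOL-Analysis.Analysis"
begin

text \<open>Shock histories s^t = (s_0,...,s_t) are nonempty lists in chronological order.
  Transition matrix: P s s' = pi(s'|s).
  Constraint index set {1..I} is a finite type 'i.\<close>

primrec prob_path :: "('s \<Rightarrow> 's \<Rightarrow> real) \<Rightarrow> 's \<Rightarrow> 's list \<Rightarrow> real" where
  "prob_path P s [] = 1"
| "prob_path P s (s' # e) = P s s' * prob_path P s' e"

definition Eh :: "('s::finite \<Rightarrow> 's \<Rightarrow> real) \<Rightarrow> 's list \<Rightarrow> nat \<Rightarrow> ('s list \<Rightarrow> real) \<Rightarrow> real" where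
  "Eh P h n f = (\<Sum>e\<in>{e::'s list. length e = n}. prob_path P (last h) e * f (h @ e))"

definition disc :: "real \<Rightarrow> ('s::finite \<Rightarrow> 's \<Rightarrow> real) \<Rightarrow> 's list \<Rightarrow> ('s list \<Rightarrow> real) \<Rightarrow> real" where
  "disc \<beta> P h f = (\<Sum>n. \<beta> ^ n * Eh P h n f)"

text \<open>State x(s^k) induced by plan a from x0: xst .. h k is the state at history take (k+1) h.\<close>
primrec xst :: "('x \<Rightarrow> 'a \<Rightarrow> 's \<Rightarrow> 'x) \<Rightarrow> ('s list \<Rightarrow> 'a) \<Rightarrow> 'x \<Rightarrow> 's list \<Rightarrow> nat \<Rightarrow> 'x" where
  "xst \<zeta> a x0 h 0 = x0"
| "xst \<zeta> a x0 h (Suc k) = \<zeta> (xst \<zeta> a x0 h k) (a (take (Suc k) h)) (h ! k)"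

definition stateof :: "('x \<Rightarrow> 'a \<Rightarrow> 's \<Rightarrow> 'x) \<Rightarrow> ('s list \<Rightarrow> 'a) \<Rightarrow> 'x \<Rightarrow> 's list \<Rightarrow> 'x" where
  "stateof \<zeta> a x0 h = xst \<zeta> a x0 h (length h - 1)"

text \<open>Pre-action history h^t = (s_0,a_0,...,s_{t-1},a_{t-1},s_t) is encoded as
  ([(s_0,a_0),...,(s_{t-1},a_{t-1})], s_t).\<close>
definition histgen :: "('s list \<Rightarrow> 'a) \<Rightarrow> 's list \<Rightarrow> ('s \<times> 'a) list \<times> 's" where
  "histgen a h = (map (\<lambda>j. (h ! j, a (take (Suc j) h))) [0..<length h - 1], last h)"

definition Hset :: "'a set \<Rightarrow> nat \<Rightarrow> (('s \<times> 'a) list \<times> 's) set" where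
  "Hset A t = {(q, s). length q = t \<and> (\<forall>y\<in>set q. snd y \<in> A)}"

definition shocks :: "('s \<times> 'a) list \<times> 's \<Rightarrow> 's list" where
  "shocks h = map fst (fst h) @ [snd h]"

definition histprob :: "('s \<Rightarrow> 's \<Rightarrow> real) \<Rightarrow> 's \<Rightarrow> 's list \<Rightarrow> real" where
  "histprob P s0 sh = (if hd sh = s0 then prob_path P s0 (tl sh) else 0)"

definition Lam :: "'a set \<Rightarrow> real \<Rightarrow> ('s \<Rightarrow> 's \<Rightarrow> real) \<Rightarrow> 's
    \<Rightarrow> ((('s \<times> 'a) list \<times> 's) \<Rightarrow> 'i::finite \<Rightarrow> real) set" where
  "Lam A \<beta> P s0 = {l. (\<forall>h i. 0 \<le> l h i) \<and>
      summable (\<lambda>t. \<Sum>h\<in>Hset A t. \<Sum>i\<in>UNIV. \<beta> ^ t * l h i * histprob P s0 (shocks h))}"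

definition plans :: "'a set \<Rightarrow> ('x \<Rightarrow> 'a \<Rightarrow> 's \<Rightarrow> real) \<Rightarrow> ('x \<Rightarrow> 'a \<Rightarrow> 's \<Rightarrow> 'x) \<Rightarrow> 'x
    \<Rightarrow> ('s list \<Rightarrow> 'a) set" where
  "plans A p \<zeta> x0 = {a. \<forall>h. h \<noteq> [] \<longrightarrow>
      a h \<in> A \<and> 0 \<le> p (stateof \<zeta> a x0 h) (a h) (last h)}"

definition feasible :: "'a set \<Rightarrow> ('x \<Rightarrow> 'a \<Rightarrow> 's \<Rightarrow> real) \<Rightarrow> ('x \<Rightarrow> 'a \<Rightarrow> 's \<Rightarrow> 'x)
    \<Rightarrow> ('i \<Rightarrow> 'x \<Rightarrow> 'a \<Rightarrow> 's::finite \<Rightarrow> real) \<Rightarrow> ('i \<Rightarrow> real) \<Rightarrow> real \<Rightarrow> ('s \<Rightarrow> 's \<Rightarrow> real)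
    \<Rightarrow> 'x \<Rightarrow> 's \<Rightarrow> ('s list \<Rightarrow> 'a) \<Rightarrow> bool" where
  "feasible A p \<zeta> g gbar \<beta> P x0 s0 a \<longleftrightarrow> a \<in> plans A p \<zeta> x0 \<and>
     (\<forall>h i. h \<noteq> [] \<and> hd h = s0 \<longrightarrow>
        gbar i \<le> disc \<beta> P h (\<lambda>h'. g i (stateof \<zeta> a x0 h') (a h') (last h')))"

definition Lag :: "('x \<Rightarrow> 'a \<Rightarrow> 's \<Rightarrow> real) \<Rightarrow> ('i::finite \<Rightarrow> 'x \<Rightarrow> 'a \<Rightarrow> 's::finite \<Rightarrow> real)
    \<Rightarrow> ('i \<Rightarrow> real) \<Rightarrow> ('x \<Rightarrow> 'a \<Rightarrow> 's \<Rightarrow> 'x) \<Rightarrow> real \<Rightarrow> ('s \<Rightarrow> 's \<Rightarrow> real)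
    \<Rightarrow> ('s list \<Rightarrow> 'a) \<Rightarrow> ((('s \<times> 'a) list \<times> 's) \<Rightarrow> 'i \<Rightarrow> real) \<Rightarrow> ('i \<Rightarrow> real)
    \<Rightarrow> 'x \<Rightarrow> 's \<Rightarrow> real" where
  "Lag r g gbar \<zeta> \<beta> P a l \<gamma> x0 s0 =
     (\<Sum>t. \<beta> ^ t * Eh P [s0] t (\<lambda>h.
        r (stateof \<zeta> a x0 h) (a h) (last h)
        + (\<Sum>i\<in>UNIV. \<gamma> i * g i (stateof \<zeta> a x0 h) (a h) (last h))
        + (\<Sum>i\<in>UNIV. l (histgen a h) i *
             (disc \<beta> P h (\<lambda>h'. g i (stateof \<zeta> a x0 h') (a h') (last h')) - gbar i))))"

definition Dval :: "'a set \<Rightarrow> ('x \<Rightarrow> 'a \<Rightarrow> 's \<Rightarrow> real) \<Rightarrow> ('x \<Rightarrow> 'a \<Rightarrow> 's \<Rightarrow> real)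
    \<Rightarrow> ('i::finite \<Rightarrow> 'x \<Rightarrow> 'a \<Rightarrow> 's::finite \<Rightarrow> real) \<Rightarrow> ('i \<Rightarrow> real) \<Rightarrow> ('x \<Rightarrow> 'a \<Rightarrow> 's \<Rightarrow> 'x)
    \<Rightarrow> real \<Rightarrow> ('s \<Rightarrow> 's \<Rightarrow> real) \<Rightarrow> ('i \<Rightarrow> real) \<Rightarrow> 'x \<Rightarrow> 's \<Rightarrow> real" where
  "Dval A p r g gbar \<zeta> \<beta> P \<gamma> x0 s0 =
     (INF l\<in>Lam A \<beta> P s0. SUP a\<in>plans A p \<zeta> x0. Lag r g gbar \<zeta> \<beta> P a l \<gamma> x0 s0)"

end

theory Submission
  imports Defs
begin

text \<open>The Lagrangian separates at the first period. With first action \<open>a0 = a [s]\<close>, period 0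
  contributes \<open>r + \<Sum>\<^sub>i \<gamma>\<^sub>i g\<^sub>i + \<lambda>\<^sub>i(h\<^sup>0) (g\<^sub>i - gbar\<^sub>i)\<close>, and what is left is, for every next
  shock \<open>s'\<close>, the Lagrangian of the continuation plan under the continuation multipliers, started
  at \<open>\<zeta>(x, a0, s)\<close>. The continuation part of the period-0 constraints is the discounted
  \<open>g\<close>-flow of that same continuation, so it is absorbed by raising the weight from \<open>\<gamma>\<close> to
  \<open>\<gamma> + \<lambda>(h\<^sup>0)\<close>.

  Multipliers are indexed by pre-action histories, so continuation multipliers may depend on
  \<open>a0\<close>; plans and multipliers can therefore be pasted together from independent continuations,
  one per next shock (and per first action, for multipliers), and pasted multipliers stay in
  \<open>\<Lambda>\<close> because \<open>\<beta> > 0\<close> and \<open>\<pi> > 0\<close>. Pasting \<open>\<epsilon>\<close>-optimal continuation multipliers gives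
  \<open>D \<le> RHS\<close>; pasting \<open>\<epsilon>\<close>-optimal continuation plans against a fixed multiplier gives
  \<open>RHS \<le> D\<close>.\<close>

section \<open>Expectations along shock paths\<close>

lemma sum_weighted_discounted_expectation:
  fixes \<beta> :: "'b::comm_ring"
  shows "(\<Sum>i\<in>I. w i * (u i + \<beta> * (\<Sum>s\<in>S. q s * d i s) - c i))
    = (\<Sum>i\<in>I. w i * (u i - c i)) + \<beta> * (\<Sum>s\<in>S. q s * (\<Sum>i\<in>I. w i * d i s))"
proof -
  have "(\<Sum>i\<in>I. w i * (u i + \<beta> * (\<Sum>s\<in>S. q s * d i s) - c i))
      = (\<Sum>i\<in>I. w i * (u i - c i)) + (\<Sum>i\<in>I. \<Sum>s\<in>S. \<beta> * (q s * (w i * d i s)))"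
  proof -
    have "w i * (u i + \<beta> * (\<Sum>s\<in>S. q s * d i s) - c i)
        = w i * (u i - c i) + (\<Sum>s\<in>S. \<beta> * (q s * (w i * d i s)))" for i
      by (simp add: algebra_simps sum_distrib_left)
    then show ?thesis
      by (simp only: sum.distrib)
  qed
  also have "(\<Sum>i\<in>I. \<Sum>s\<in>S. \<beta> * (q s * (w i * d i s))) = \<beta> * (\<Sum>s\<in>S. q s * (\<Sum>i\<in>I. w i * d i s))"
    by (subst sum.swap) (simp add: sum_distrib_left)
  finally show ?thesis .
qed

lemma summable_geometric_cmult: "0 \<le> \<beta> \<Longrightarrow> \<beta> < 1 \<Longrightarrow> summable (\<lambda>n. M * \<beta> ^ n)"
  for \<beta> :: real
  by (intro summable_mult summable_geometric) auto

lemma suminf_geometric_cmult: "0 \<le> \<beta> \<Longrightarrow> \<beta> < 1 \<Longrightarrow> (\<Sum>n. M * \<beta> ^ n) = M / (1 - \<beta>)"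
  for \<beta> :: real
  by (simp add: suminf_mult suminf_geometric)

lemma lists_length_0: "{e::'s list. length e = 0} = {[]}"
  by auto

lemma lists_length_Suc:
  "{e::'s list. length e = Suc n} = (\<lambda>(c, e). c # e) ` (UNIV \<times> {e. length e = n})"
  by (auto simp: length_Suc_conv image_iff)

lemma sum_lists_length_Suc:
  "(\<Sum>e\<in>{e::'s::finite list. length e = Suc n}. \<phi> e) = (\<Sum>c\<in>UNIV. \<Sum>e\<in>{e. length e = n}. \<phi> (c # e))"
proof -
  have "inj_on (\<lambda>(c, e). c # e) (UNIV \<times> {e::'s list. length e = n})"
    by (auto simp: inj_on_def)
  then have "(\<Sum>e\<in>{e::'s list. length e = Suc n}. \<phi> e) = (\<Sum>(c, e)\<in>UNIV \<times> {e. length e = n}. \<phi> (c # e))"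
    unfolding lists_length_Suc by (simp add: sum.reindex case_prod_unfold)
  then show ?thesis
    by (simp add: sum.cartesian_product)
qed

lemma prob_path_nonneg: "\<forall>s s'. 0 \<le> P s s' \<Longrightarrow> 0 \<le> prob_path P s e"
  by (induction e arbitrary: s) auto

lemma sum_prob_path:
  assumes "\<forall>s. (\<Sum>s'\<in>UNIV. P s s') = 1"
  shows "(\<Sum>e\<in>{e::'s::finite list. length e = n}. prob_path P s e) = 1"
proof (induction n arbitrary: s)
  case 0
  then show ?case by (simp add: lists_length_0)
next
  case (Suc n)
  then show ?case
    unfolding sum_lists_length_Suc by (simp add: sum_distrib_left[symmetric] assms)
qed

lemma Eh_0: "Eh P h 0 f = f h"
  by (simp add: Eh_def lists_length_0)

lemma Eh_Suc_singleton:
  "Eh P [s] (Suc n) f = (\<Sum>s1\<in>UNIV. P s s1 * Eh P [s1] n (\<lambda>h. f (s # h)))"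
  unfolding Eh_def sum_lists_length_Suc by (simp add: sum_distrib_left mult.assoc)

lemma Eh_Cons: "h \<noteq> [] \<Longrightarrow> Eh P (s # h) n f = Eh P h n (\<lambda>k. f (s # k))"
  by (simp add: Eh_def)

lemma Eh_cong:
  "(\<And>e. length e = n \<Longrightarrow> f (h @ e) = f' (h @ e)) \<Longrightarrow> Eh P h n f = Eh P h n f'"
  unfolding Eh_def by (rule sum.cong) auto

lemma Eh_add: "Eh P h n (\<lambda>k. f k + f' k) = Eh P h n f + Eh P h n f'"
  unfolding Eh_def by (simp add: distrib_left sum.distrib)

lemma Eh_cmult: "Eh P h n (\<lambda>k. c * f k) = c * Eh P h n f"
  unfolding Eh_def by (simp add: sum_distrib_left mult.left_commute)

lemma Eh_uminus: "Eh P h n (\<lambda>k. - f k) = - Eh P h n f"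
  unfolding Eh_def by (simp add: sum_negf)

lemma Eh_sum: "Eh P h n (\<lambda>k. \<Sum>i\<in>I. f i k) = (\<Sum>i\<in>I. Eh P h n (f i))"
  unfolding Eh_def by (simp add: sum_distrib_left sum.swap[of _ I])

lemma disc_cong:
  assumes "\<And>e. f (h @ e) = f' (h @ e)"
  shows "disc \<beta> P h f = disc \<beta> P h f'"
proof -
  have "Eh P h n f = Eh P h n f'" for n
    by (rule Eh_cong) (rule assms)
  then show ?thesis
    by (simp add: disc_def)
qed

lemma disc_Cons: "h \<noteq> [] \<Longrightarrow> disc \<beta> P (s # h) f = disc \<beta> P h (\<lambda>k. f (s # k))"
  by (simp add: disc_def Eh_Cons)

lemma suminf_Eh_head:
  assumes "summable (\<lambda>n. \<beta> ^ n * Eh P [s] n f)"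
    and "\<And>s1. summable (\<lambda>n. \<beta> ^ n * Eh P [s1] n (\<lambda>h. f (s # h)))"
  shows "(\<Sum>n. \<beta> ^ n * Eh P [s] n f)
    = f [s] + \<beta> * (\<Sum>s1\<in>UNIV. P s s1 * (\<Sum>n. \<beta> ^ n * Eh P [s1] n (\<lambda>h. f (s # h))))"
proof -
  let ?tail = "\<lambda>s1 n. P s s1 * (\<beta> ^ n * Eh P [s1] n (\<lambda>h. f (s # h)))"
  have tail: "summable (?tail s1)" for s1
    by (rule summable_mult) (rule assms(2))
  have shift: "\<beta> ^ Suc n * Eh P [s] (Suc n) f = \<beta> * (\<Sum>s1\<in>UNIV. ?tail s1 n)" for n
    by (simp add: Eh_Suc_singleton sum_distrib_left mult_ac)
  have "(\<Sum>n. \<beta> ^ n * Eh P [s] n f) = f [s] + (\<Sum>n. \<beta> ^ Suc n * Eh P [s] (Suc n) f)"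
    using suminf_split_head[OF assms(1)] by (simp add: Eh_0)
  also have "\<dots> = f [s] + (\<Sum>n. \<beta> * (\<Sum>s1\<in>UNIV. ?tail s1 n))"
    by (simp only: shift)
  also have "(\<Sum>n. \<beta> * (\<Sum>s1\<in>UNIV. ?tail s1 n)) = \<beta> * (\<Sum>s1\<in>UNIV. \<Sum>n. ?tail s1 n)"
    using tail by (simp add: suminf_mult summable_sum suminf_sum)
  also have "(\<Sum>s1\<in>UNIV. \<Sum>n. ?tail s1 n)
      = (\<Sum>s1\<in>UNIV. P s s1 * (\<Sum>n. \<beta> ^ n * Eh P [s1] n (\<lambda>h. f (s # h))))"
    by (simp add: suminf_mult assms(2))
  finally show ?thesis .
qed

context
  fixes P :: "'s::finite \<Rightarrow> 's \<Rightarrow> real"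
  assumes P_nonneg: "\<forall>s s'. 0 \<le> P s s'" and P_sum: "\<forall>s. (\<Sum>s'\<in>UNIV. P s s') = 1"
begin

lemma Eh_mono:
  "(\<And>e. length e = n \<Longrightarrow> f (h @ e) \<le> f' (h @ e)) \<Longrightarrow> Eh P h n f \<le> Eh P h n f'"
  unfolding Eh_def
  by (rule sum_mono) (auto intro!: mult_left_mono prob_path_nonneg P_nonneg)

lemma Eh_const: "Eh P h n (\<lambda>_. c) = c"
  unfolding Eh_def by (simp add: sum_distrib_right[symmetric] sum_prob_path[OF P_sum])

lemma Eh_ge_const: "(\<And>e. length e = n \<Longrightarrow> c \<le> f (h @ e)) \<Longrightarrow> c \<le> Eh P h n f"
  using Eh_mono[of n "\<lambda>_. c" h f] by (simp add: Eh_const)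

lemma Eh_abs_le:
  assumes "\<And>e. length e = n \<Longrightarrow> \<bar>f (h @ e)\<bar> \<le> f' (h @ e)"
  shows "\<bar>Eh P h n f\<bar> \<le> Eh P h n f'"
proof -
  have "Eh P h n f \<le> Eh P h n f'" and "Eh P h n (\<lambda>k. - f k) \<le> Eh P h n f'"
    using assms by (auto intro!: Eh_mono simp: abs_le_iff)
  then show ?thesis by (simp add: Eh_uminus)
qed

lemma Eh_abs_le_const: "(\<And>e. length e = n \<Longrightarrow> \<bar>f (h @ e)\<bar> \<le> M) \<Longrightarrow> \<bar>Eh P h n f\<bar> \<le> M"
  using Eh_abs_le[of n f h "\<lambda>_. M"] by (simp add: Eh_const)

context
  fixes \<beta> :: real
  assumes beta_nonneg: "0 \<le> \<beta>" and beta_less_1: "\<beta> < 1"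
begin

lemma discounted_Eh_abs_le:
  "(\<And>e. \<bar>f (h @ e)\<bar> \<le> M) \<Longrightarrow> \<bar>\<beta> ^ n * Eh P h n f\<bar> \<le> M * \<beta> ^ n"
  using mult_left_mono[OF Eh_abs_le_const[of n f h M] zero_le_power[OF beta_nonneg, of n]]
  by (simp add: abs_mult mult.commute beta_nonneg)

lemma disc_summable:
  "(\<And>e. \<bar>f (h @ e)\<bar> \<le> M) \<Longrightarrow> summable (\<lambda>n. \<beta> ^ n * Eh P h n f)"
  by (rule summable_comparison_test'[OF summable_geometric_cmult[OF beta_nonneg beta_less_1], of 0 _ M])
     (simp add: discounted_Eh_abs_le)

lemma disc_abs_le:
  "(\<And>e. \<bar>f (h @ e)\<bar> \<le> M) \<Longrightarrow> \<bar>disc \<beta> P h f\<bar> \<le> M / (1 - \<beta>)"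
  using norm_suminf_le[OF _ summable_geometric_cmult[OF beta_nonneg beta_less_1],
      of "\<lambda>n. \<beta> ^ n * Eh P h n f" M]
  by (simp add: disc_def discounted_Eh_abs_le suminf_geometric_cmult[OF beta_nonneg beta_less_1])

end

end

section \<open>Histories\<close>

lemma xst_Cons_Suc:
  "xst \<zeta> a x (s # h) (Suc k) = xst \<zeta> (\<lambda>h. a (s # h)) (\<zeta> x (a [s]) s) h k"
  by (induction k) auto

lemma stateof_Cons:
  "h \<noteq> [] \<Longrightarrow> stateof \<zeta> a x (s # h) = stateof \<zeta> (\<lambda>h. a (s # h)) (\<zeta> x (a [s]) s) h"
  unfolding stateof_def using xst_Cons_Suc[of \<zeta> a x s h "length h - 1"] by simp

lemma stateof_singleton: "stateof \<zeta> a x [s] = x"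
  by (simp add: stateof_def)

lemma xst_cong:
  "(\<And>k'. k' < k \<Longrightarrow> a (take (Suc k') h) = b (take (Suc k') h)) \<Longrightarrow> xst \<zeta> a x h k = xst \<zeta> b x h k"
  by (induction k) auto

lemma stateof_cong_hd:
  assumes "h \<noteq> []" and "\<And>h'. h' \<noteq> [] \<Longrightarrow> hd h' = hd h \<Longrightarrow> a h' = b h'"
  shows "stateof \<zeta> a x h = stateof \<zeta> b x h"
  unfolding stateof_def using assms by (intro xst_cong) auto

lemma stateof_in_invariant:
  assumes "h \<noteq> []" and "\<And>h'. h' \<noteq> [] \<Longrightarrow> a h' \<in> A" and "x \<in> X"
    and "\<forall>x\<in>X. \<forall>a\<in>A. \<forall>s. \<zeta> x a s \<in> X"
  shows "stateof \<zeta> a x h \<in> X"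
proof -
  have "xst \<zeta> a x h k \<in> X" for k
    using assms by (induction k) auto
  then show ?thesis
    by (simp add: stateof_def)
qed

lemma histgen_singleton: "histgen a [s] = ([], s)"
  by (simp add: histgen_def)

lemma histgen_Cons:
  assumes "h \<noteq> []"
  shows "histgen a (s # h)
    = ((s, a [s]) # fst (histgen (\<lambda>h. a (s # h)) h), snd (histgen (\<lambda>h. a (s # h)) h))"
proof -
  obtain m where m: "length h = Suc m"
    using assms by (cases h) auto
  have "[0..<length h] = 0 # map Suc [0..<length h - 1]"
    unfolding m by (simp add: map_Suc_upt upt_conv_Cons)
  then show ?thesis
    using assms unfolding histgen_def by simp
qed

lemma shocks_histgen: "h \<noteq> [] \<Longrightarrow> shocks (histgen a h) = h"
proof -
  assume h: "h \<noteq> []"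
  have "map (\<lambda>j. h ! j) [0..<length h - 1] = butlast h"
    by (rule nth_equalityI) (auto simp: nth_butlast)
  then show ?thesis
    unfolding shocks_def histgen_def using h by (simp add: comp_def)
qed

lemma shocks_not_Nil: "shocks k \<noteq> []"
  by (simp add: shocks_def)

lemma histgen_cong_hd:
  assumes "h \<noteq> []" and "\<And>h'. h' \<noteq> [] \<Longrightarrow> hd h' = hd h \<Longrightarrow> a h' = b h'"
  shows "histgen a h = histgen b h"
  unfolding histgen_def using assms by auto

lemma histgen_in_Hset:
  "(\<And>h'. h' \<noteq> [] \<Longrightarrow> a h' \<in> A) \<Longrightarrow> histgen a (s0 # e) \<in> Hset A (length e)"
  unfolding histgen_def Hset_def by auto

lemma finite_Hset: "finite A \<Longrightarrow> finite (Hset A t :: (('s::finite \<times> 'a) list \<times> 's) set)"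
proof -
  assume "finite A"
  then have "finite ({q. set q \<subseteq> (UNIV :: 's set) \<times> A \<and> length q = t} \<times> (UNIV :: 's set))"
    by (intro finite_cartesian_product finite_lists_length_eq) auto
  moreover have "Hset A t \<subseteq> {q. set q \<subseteq> (UNIV :: 's set) \<times> A \<and> length q = t} \<times> UNIV"
    by (auto simp: Hset_def)
  ultimately show ?thesis
    by (rule finite_subset[rotated])
qed

definition Hset_Cons :: "'s \<times> 'a \<times> (('s \<times> 'a) list \<times> 's) \<Rightarrow> ('s \<times> 'a) list \<times> 's" where
  "Hset_Cons = (\<lambda>(c, b, k). ((c, b) # fst k, snd k))"

lemma shocks_Hset_Cons: "shocks (Hset_Cons (c, b, k)) = c # shocks k"
  by (simp add: Hset_Cons_def shocks_def)

lemma inj_Hset_Cons: "inj Hset_Cons"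
  by (auto simp: inj_def Hset_Cons_def prod_eq_iff)

lemma Hset_Suc: "Hset A (Suc t) = Hset_Cons ` (UNIV \<times> A \<times> Hset A t)"
proof
  show "Hset_Cons ` (UNIV \<times> A \<times> Hset A t) \<subseteq> Hset A (Suc t)"
    by (auto simp: Hset_Cons_def Hset_def)
  show "Hset A (Suc t) \<subseteq> Hset_Cons ` (UNIV \<times> A \<times> Hset A t)"
  proof
    fix h
    assume "h \<in> Hset A (Suc t)"
    then obtain q s' where h: "h = (q, s')" "length q = Suc t" "\<forall>y\<in>set q. snd y \<in> A"
      by (cases h) (auto simp: Hset_def)
    then obtain c b q' where "q = (c, b) # q'"
      by (cases q) auto
    with h show "h \<in> Hset_Cons ` (UNIV \<times> A \<times> Hset A t)"
      by (auto simp: Hset_Cons_def Hset_def image_iff intro!: bexI[where x = "(c, b, q', s')"])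
  qed
qed

lemma histprob_Cons_self: "histprob P s0 (s0 # e) = prob_path P s0 e"
  by (simp add: histprob_def)

section \<open>Bounds on the Lagrangian\<close>

locale constrained_dp =
  fixes A :: "'a set" and X :: "'x set" and P :: "'s::finite \<Rightarrow> 's \<Rightarrow> real"
    and \<zeta> :: "'x \<Rightarrow> 'a \<Rightarrow> 's \<Rightarrow> 'x" and p r :: "'x \<Rightarrow> 'a \<Rightarrow> 's \<Rightarrow> real"
    and g :: "'i::finite \<Rightarrow> 'x \<Rightarrow> 'a \<Rightarrow> 's \<Rightarrow> real" and gbar :: "'i \<Rightarrow> real"
    and \<beta> :: real and Br Bg :: real
  assumes finite_A: "finite A"
    and P_pos: "\<forall>s s'. 0 < P s s'" and P_sum: "\<forall>s. (\<Sum>s'\<in>UNIV. P s s') = 1"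
    and \<zeta>_in_X: "\<forall>x\<in>X. \<forall>a\<in>A. \<forall>s. \<zeta> x a s \<in> X"
    and r_bound: "\<And>x a s. x \<in> X \<Longrightarrow> a \<in> A \<Longrightarrow> \<bar>r x a s\<bar> \<le> Br"
    and g_bound: "\<And>i x a s. x \<in> X \<Longrightarrow> a \<in> A \<Longrightarrow> \<bar>g i x a s\<bar> \<le> Bg"
    and Bg_nonneg: "0 \<le> Bg"
    and beta_pos: "0 < \<beta>" and beta_less_1: "\<beta> < 1"
    and feasible_exists: "\<forall>x0\<in>X. \<forall>s0. \<exists>a. feasible A p \<zeta> g gbar \<beta> P x0 s0 a"
begin

abbreviation "Plans x0 \<equiv> plans A p \<zeta> x0"
abbreviation Mults :: "'s \<Rightarrow> ((('s \<times> 'a) list \<times> 's) \<Rightarrow> 'i \<Rightarrow> real) set" where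
  "Mults s0 \<equiv> Lam A \<beta> P s0"
abbreviation "Lagr a l \<gamma> x0 s0 \<equiv> Lag r g gbar \<zeta> \<beta> P a l \<gamma> x0 s0"
abbreviation "Dual \<gamma> x0 s0 \<equiv> Dval A p r g gbar \<zeta> \<beta> P \<gamma> x0 s0"

definition constr_flow :: "'i \<Rightarrow> ('s list \<Rightarrow> 'a) \<Rightarrow> 'x \<Rightarrow> 's list \<Rightarrow> real" where
  "constr_flow i a x0 h = g i (stateof \<zeta> a x0 h) (a h) (last h)"

definition lag_flow :: "('s list \<Rightarrow> 'a) \<Rightarrow> ((('s \<times> 'a) list \<times> 's) \<Rightarrow> 'i \<Rightarrow> real) \<Rightarrow> ('i \<Rightarrow> real)
    \<Rightarrow> 'x \<Rightarrow> 's list \<Rightarrow> real" where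
  "lag_flow a l \<gamma> x0 h = r (stateof \<zeta> a x0 h) (a h) (last h)
     + (\<Sum>i\<in>UNIV. \<gamma> i * constr_flow i a x0 h)
     + (\<Sum>i\<in>UNIV. l (histgen a h) i * (disc \<beta> P h (constr_flow i a x0) - gbar i))"

definition mult_mass :: "((('s \<times> 'a) list \<times> 's) \<Rightarrow> 'i \<Rightarrow> real) \<Rightarrow> 's \<Rightarrow> nat \<Rightarrow> real" where
  "mult_mass l s0 t = (\<Sum>h\<in>Hset A t. \<Sum>i\<in>UNIV. \<beta> ^ t * l h i * histprob P s0 (shocks h))"

definition flow_bound :: "('i \<Rightarrow> real) \<Rightarrow> real" where
  "flow_bound \<gamma> = Br + (\<Sum>i\<in>UNIV. \<bar>\<gamma> i\<bar>) * Bg"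

definition gap_bound :: real where
  "gap_bound = Bg / (1 - \<beta>) + (\<Sum>i\<in>UNIV. \<bar>gbar i\<bar>)"

lemma P_nonneg: "\<forall>s s'. 0 \<le> P s s'"
  using P_pos by (simp add: less_imp_le)

lemma P_le_1: "P s s' \<le> 1"
proof -
  have "P s s' \<le> (\<Sum>s'\<in>UNIV. P s s')"
    by (rule member_le_sum) (use P_nonneg in auto)
  then show ?thesis
    using P_sum by simp
qed

lemma beta_nonneg: "0 \<le> \<beta>"
  using beta_pos by simp

lemma discount_le: "0 \<le> \<epsilon> \<Longrightarrow> \<beta> * \<epsilon> \<le> \<epsilon>"
  using beta_nonneg beta_less_1 by (simp add: mult_left_le_one_le)

lemma gap_bound_nonneg: "0 \<le> gap_bound"
  unfolding gap_bound_def using Bg_nonneg beta_less_1 by (auto intro!: add_nonneg_nonneg sum_nonneg)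

lemma histprob_nonneg: "0 \<le> histprob P s0 sh"
  unfolding histprob_def using prob_path_nonneg[OF P_nonneg] by auto

lemma Lagr_eq_suminf: "Lagr a l \<gamma> x0 s0 = (\<Sum>t. \<beta> ^ t * Eh P [s0] t (lag_flow a l \<gamma> x0))"
  unfolding Lag_def lag_flow_def constr_flow_def ..

lemma Mults_nonneg: "l \<in> Mults s0 \<Longrightarrow> 0 \<le> l h i"
  by (cases h) (auto simp: Lam_def)

lemma summable_mult_mass: "l \<in> Mults s0 \<Longrightarrow> summable (mult_mass l s0)"
  by (simp add: Lam_def mult_mass_def[abs_def])

lemma MultsI: "(\<And>h i. 0 \<le> l h i) \<Longrightarrow> summable (mult_mass l s0) \<Longrightarrow> l \<in> Mults s0"
  unfolding Lam_def mult_mass_def[abs_def] by auto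

lemma zero_in_Mults: "(\<lambda>h i. 0) \<in> Mults s0"
  by (simp add: Lam_def)

lemma Mults_not_empty: "Mults s0 \<noteq> {}"
  using zero_in_Mults by blast

lemma mult_mass_nonneg: "(\<And>h i. 0 \<le> l h i) \<Longrightarrow> 0 \<le> mult_mass l s0 t"
  unfolding mult_mass_def
  by (intro sum_nonneg mult_nonneg_nonneg zero_le_power beta_nonneg histprob_nonneg)

lemma plans_in_A: "a \<in> Plans x0 \<Longrightarrow> h \<noteq> [] \<Longrightarrow> a h \<in> A"
  by (simp add: plans_def)

lemma plans_p_nonneg: "a \<in> Plans x0 \<Longrightarrow> h \<noteq> [] \<Longrightarrow> 0 \<le> p (stateof \<zeta> a x0 h) (a h) (last h)"
  by (simp add: plans_def)

lemma plans_stateof_in_X: "a \<in> Plans x0 \<Longrightarrow> x0 \<in> X \<Longrightarrow> h \<noteq> [] \<Longrightarrow> stateof \<zeta> a x0 h \<in> X"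
  by (rule stateof_in_invariant[where A = A]) (auto simp: plans_in_A \<zeta>_in_X)

lemma feasible_in_Plans: "feasible A p \<zeta> g gbar \<beta> P x0 s0 a \<Longrightarrow> a \<in> Plans x0"
  by (simp add: feasible_def)

lemma Plans_not_empty: "x0 \<in> X \<Longrightarrow> Plans x0 \<noteq> {}"
  using feasible_exists feasible_in_Plans by blast

lemma constr_flow_bound:
  "a \<in> Plans x0 \<Longrightarrow> x0 \<in> X \<Longrightarrow> h \<noteq> [] \<Longrightarrow> \<bar>constr_flow i a x0 h\<bar> \<le> Bg"
  unfolding constr_flow_def by (intro g_bound plans_stateof_in_X plans_in_A)

lemma disc_constr_flow_bound:
  assumes "a \<in> Plans x0" "x0 \<in> X" "h \<noteq> []"
  shows "\<bar>disc \<beta> P h (constr_flow i a x0)\<bar> \<le> Bg / (1 - \<beta>)"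
  by (rule disc_abs_le[OF P_nonneg P_sum beta_nonneg beta_less_1])
     (rule constr_flow_bound[OF assms(1,2)], use assms(3) in simp)

lemma abs_weighted_constr_flow_le:
  assumes "a \<in> Plans x0" "x0 \<in> X" "h \<noteq> []"
  shows "\<bar>\<Sum>i\<in>UNIV. \<gamma> i * constr_flow i a x0 h\<bar> \<le> (\<Sum>i\<in>UNIV. \<bar>\<gamma> i\<bar>) * Bg"
proof -
  have "\<bar>\<Sum>i\<in>UNIV. \<gamma> i * constr_flow i a x0 h\<bar> \<le> (\<Sum>i\<in>UNIV. \<bar>\<gamma> i * constr_flow i a x0 h\<bar>)"
    by (rule sum_abs)
  also have "\<dots> \<le> (\<Sum>i\<in>UNIV. \<bar>\<gamma> i\<bar> * Bg)"
    by (rule sum_mono) (simp add: abs_mult mult_left_mono constr_flow_bound[OF assms])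
  finally show ?thesis
    by (simp add: sum_distrib_right)
qed

lemma abs_weighted_gap_le:
  assumes "a \<in> Plans x0" "x0 \<in> X" "h \<noteq> []" "\<And>i. 0 \<le> w i"
  shows "\<bar>\<Sum>i\<in>UNIV. w i * (disc \<beta> P h (constr_flow i a x0) - gbar i)\<bar> \<le> gap_bound * (\<Sum>i\<in>UNIV. w i)"
proof -
  have gap: "\<bar>disc \<beta> P h (constr_flow i a x0) - gbar i\<bar> \<le> gap_bound" for i
  proof -
    have "\<bar>gbar i\<bar> \<le> (\<Sum>i\<in>UNIV. \<bar>gbar i\<bar>)"
      by (rule member_le_sum) auto
    then show ?thesis
      using disc_constr_flow_bound[OF assms(1-3), of i] unfolding gap_bound_def by linarith
  qed
  have "\<bar>\<Sum>i\<in>UNIV. w i * (disc \<beta> P h (constr_flow i a x0) - gbar i)\<bar>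
      \<le> (\<Sum>i\<in>UNIV. \<bar>w i * (disc \<beta> P h (constr_flow i a x0) - gbar i)\<bar>)"
    by (rule sum_abs)
  also have "\<dots> \<le> (\<Sum>i\<in>UNIV. w i * gap_bound)"
    by (rule sum_mono) (simp add: abs_mult abs_of_nonneg[OF assms(4)] mult_left_mono[OF gap assms(4)])
  also have "\<dots> = gap_bound * (\<Sum>i\<in>UNIV. w i)"
    by (subst sum_distrib_left) (simp add: mult.commute)
  finally show ?thesis .
qed

lemma lag_flow_abs_le:
  assumes "a \<in> Plans x0" "x0 \<in> X" "h \<noteq> []" "\<And>h i. 0 \<le> l h i"
  shows "\<bar>lag_flow a l \<gamma> x0 h\<bar> \<le> flow_bound \<gamma> + gap_bound * (\<Sum>i\<in>UNIV. l (histgen a h) i)"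
proof -
  have "\<bar>r (stateof \<zeta> a x0 h) (a h) (last h)\<bar> \<le> Br"
    by (rule r_bound[OF plans_stateof_in_X[OF assms(1-3)] plans_in_A[OF assms(1,3)]])
  then show ?thesis
    using abs_weighted_constr_flow_le[OF assms(1-3), of \<gamma>] abs_weighted_gap_le[where w = "l (histgen a h)", OF assms(1-3) assms(4)]
    unfolding lag_flow_def flow_bound_def by linarith
qed

lemma discounted_Eh_mult_le_mult_mass:
  assumes "\<And>h'. h' \<noteq> [] \<Longrightarrow> a h' \<in> A" "\<And>h i. 0 \<le> l h i"
  shows "\<beta> ^ t * Eh P [s0] t (\<lambda>h. \<Sum>i\<in>UNIV. l (histgen a h) i) \<le> mult_mass l s0 t"
proof -
  define \<psi> where "\<psi> h = (\<Sum>i\<in>UNIV. \<beta> ^ t * l h i * histprob P s0 (shocks h))" for h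
  define \<iota> where "\<iota> e = histgen a (s0 # e)" for e
  have inj: "inj_on \<iota> {e. length e = t}"
    by (rule inj_onI) (metis \<iota>_def list.distinct(1) list.inject shocks_histgen)
  have "\<beta> ^ t * Eh P [s0] t (\<lambda>h. \<Sum>i\<in>UNIV. l (histgen a h) i) = (\<Sum>e\<in>{e. length e = t}. \<psi> (\<iota> e))"
    unfolding Eh_def \<psi>_def \<iota>_def
    by (simp add: shocks_histgen histprob_Cons_self sum_distrib_left sum_distrib_right mult_ac)
  also have "\<dots> = (\<Sum>h\<in>\<iota> ` {e. length e = t}. \<psi> h)"
    by (simp add: sum.reindex[OF inj])
  also have "\<dots> \<le> (\<Sum>h\<in>Hset A t. \<psi> h)"
  proof (rule sum_mono2[OF finite_Hset[OF finite_A]])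
    show "\<iota> ` {e. length e = t} \<subseteq> Hset A t"
      unfolding \<iota>_def using histgen_in_Hset[OF assms(1)] by auto
    show "0 \<le> \<psi> h" for h
      unfolding \<psi>_def by (intro sum_nonneg mult_nonneg_nonneg zero_le_power beta_nonneg assms(2) histprob_nonneg)
  qed
  finally show ?thesis
    unfolding mult_mass_def \<psi>_def .
qed

lemma Lagr_term_abs_le:
  assumes "a \<in> Plans x0" "x0 \<in> X" "l \<in> Mults s0"
  shows "\<bar>\<beta> ^ t * Eh P [s0] t (lag_flow a l \<gamma> x0)\<bar> \<le> flow_bound \<gamma> * \<beta> ^ t + gap_bound * mult_mass l s0 t"
proof -
  have l: "\<And>h i. 0 \<le> l h i"
    using assms(3) by (simp add: Mults_nonneg)
  have "\<bar>Eh P [s0] t (lag_flow a l \<gamma> x0)\<bar>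
      \<le> Eh P [s0] t (\<lambda>h. flow_bound \<gamma> + gap_bound * (\<Sum>i\<in>UNIV. l (histgen a h) i))"
    by (rule Eh_abs_le[OF P_nonneg P_sum]) (rule lag_flow_abs_le[OF assms(1,2) _ l], simp)
  also have "\<dots> = flow_bound \<gamma> + gap_bound * Eh P [s0] t (\<lambda>h. \<Sum>i\<in>UNIV. l (histgen a h) i)"
    by (simp add: Eh_add Eh_cmult Eh_const[OF P_nonneg P_sum])
  finally have "\<bar>\<beta> ^ t * Eh P [s0] t (lag_flow a l \<gamma> x0)\<bar>
      \<le> \<beta> ^ t * (flow_bound \<gamma> + gap_bound * Eh P [s0] t (\<lambda>h. \<Sum>i\<in>UNIV. l (histgen a h) i))"
    using beta_nonneg by (simp add: abs_mult mult_left_mono)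
  also have "\<dots> = flow_bound \<gamma> * \<beta> ^ t
      + gap_bound * (\<beta> ^ t * Eh P [s0] t (\<lambda>h. \<Sum>i\<in>UNIV. l (histgen a h) i))"
    by (simp add: algebra_simps)
  also have "\<dots> \<le> flow_bound \<gamma> * \<beta> ^ t + gap_bound * mult_mass l s0 t"
  proof -
    have "\<beta> ^ t * Eh P [s0] t (\<lambda>h. \<Sum>i\<in>UNIV. l (histgen a h) i) \<le> mult_mass l s0 t"
      by (rule discounted_Eh_mult_le_mult_mass) (use plans_in_A[OF assms(1)] l in auto)
    then show ?thesis
      by (simp add: mult_left_mono gap_bound_nonneg)
  qed
  finally show ?thesis .
qed

lemma summable_Lagr_bound: "l \<in> Mults s0 \<Longrightarrow> summable (\<lambda>t. flow_bound \<gamma> * \<beta> ^ t + gap_bound * mult_mass l s0 t)"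
  by (intro summable_add summable_geometric_cmult beta_nonneg beta_less_1 summable_mult summable_mult_mass)

lemma summable_Lagr_terms:
  assumes "a \<in> Plans x0" "x0 \<in> X" "l \<in> Mults s0"
  shows "summable (\<lambda>t. \<beta> ^ t * Eh P [s0] t (lag_flow a l \<gamma> x0))"
  by (rule summable_comparison_test'[OF summable_Lagr_bound[where \<gamma> = \<gamma>, OF assms(3)], of 0])
     (simp add: Lagr_term_abs_le[OF assms])

lemma Lagr_le:
  assumes "a \<in> Plans x0" "x0 \<in> X" "l \<in> Mults s0"
  shows "Lagr a l \<gamma> x0 s0 \<le> flow_bound \<gamma> / (1 - \<beta>) + gap_bound * suminf (mult_mass l s0)"
proof -
  have "Lagr a l \<gamma> x0 s0 \<le> (\<Sum>t. flow_bound \<gamma> * \<beta> ^ t + gap_bound * mult_mass l s0 t)"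
    unfolding Lagr_eq_suminf
    by (rule suminf_le[OF _ summable_Lagr_terms[OF assms] summable_Lagr_bound[OF assms(3)]])
       (rule abs_le_D1[OF Lagr_term_abs_le[OF assms]])
  also have "\<dots> = flow_bound \<gamma> / (1 - \<beta>) + gap_bound * suminf (mult_mass l s0)"
    using summable_mult_mass[OF assms(3)]
    by (simp add: suminf_add[symmetric] summable_geometric_cmult suminf_geometric_cmult
        beta_nonneg beta_less_1 suminf_mult)
  finally show ?thesis .
qed

lemma feasible_lag_flow_ge:
  assumes a: "feasible A p \<zeta> g gbar \<beta> P x0 s0 a" and x0: "x0 \<in> X" and l: "\<And>h i. 0 \<le> l h i"
  shows "- flow_bound \<gamma> \<le> lag_flow a l \<gamma> x0 (s0 # e)"
proof -
  have plan: "a \<in> Plans x0"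
    by (rule feasible_in_Plans[OF a])
  have ne: "s0 # e \<noteq> []"
    by simp
  have "0 \<le> l (histgen a (s0 # e)) i * (disc \<beta> P (s0 # e) (constr_flow i a x0) - gbar i)" for i
    using a l unfolding feasible_def constr_flow_def by (simp add: mult_nonneg_nonneg)
  then have "0 \<le> (\<Sum>i\<in>UNIV. l (histgen a (s0 # e)) i * (disc \<beta> P (s0 # e) (constr_flow i a x0) - gbar i))"
    by (rule sum_nonneg)
  moreover have "\<bar>r (stateof \<zeta> a x0 (s0 # e)) (a (s0 # e)) (last (s0 # e))\<bar> \<le> Br"
    by (rule r_bound[OF plans_stateof_in_X[OF plan x0 ne] plans_in_A[OF plan ne]])
  ultimately show ?thesis
    using abs_weighted_constr_flow_le[OF plan x0 ne, of \<gamma>]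
    unfolding lag_flow_def flow_bound_def by linarith
qed

lemma feasible_Lagr_ge:
  assumes a: "feasible A p \<zeta> g gbar \<beta> P x0 s0 a" and x0: "x0 \<in> X" and l: "l \<in> Mults s0"
  shows "- flow_bound \<gamma> / (1 - \<beta>) \<le> Lagr a l \<gamma> x0 s0"
proof -
  have "- flow_bound \<gamma> * \<beta> ^ t \<le> \<beta> ^ t * Eh P [s0] t (lag_flow a l \<gamma> x0)" for t
  proof -
    have "- flow_bound \<gamma> \<le> Eh P [s0] t (lag_flow a l \<gamma> x0)"
      by (rule Eh_ge_const[OF P_nonneg P_sum]) (simp add: feasible_lag_flow_ge[OF a x0 Mults_nonneg[OF l]])
    from mult_left_mono[OF this zero_le_power[OF beta_nonneg, of t]] show ?thesis
      by (simp add: mult.commute)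
  qed
  then have "(\<Sum>t. - flow_bound \<gamma> * \<beta> ^ t) \<le> Lagr a l \<gamma> x0 s0"
    unfolding Lagr_eq_suminf
    by (rule suminf_le[OF _ summable_geometric_cmult[OF beta_nonneg beta_less_1]
          summable_Lagr_terms[OF feasible_in_Plans[OF a] x0 l]])
  then show ?thesis
    using suminf_geometric_cmult[OF beta_nonneg beta_less_1, of "- flow_bound \<gamma>"] by simp
qed

definition sup_Lagr :: "((('s \<times> 'a) list \<times> 's) \<Rightarrow> 'i \<Rightarrow> real) \<Rightarrow> ('i \<Rightarrow> real) \<Rightarrow> 'x \<Rightarrow> 's \<Rightarrow> real" where
  "sup_Lagr l \<gamma> x0 s0 = (SUP a\<in>Plans x0. Lagr a l \<gamma> x0 s0)"

lemma Dual_eq_INF_sup_Lagr: "Dual \<gamma> x0 s0 = (INF l\<in>Mults s0. sup_Lagr l \<gamma> x0 s0)"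
  unfolding Dval_def sup_Lagr_def ..

lemma sup_Lagr_upper:
  assumes "x0 \<in> X" "l \<in> Mults s0" "a \<in> Plans x0"
  shows "Lagr a l \<gamma> x0 s0 \<le> sup_Lagr l \<gamma> x0 s0"
  unfolding sup_Lagr_def
  by (rule cSUP_upper[OF assms(3)], rule bdd_aboveI2) (rule Lagr_le[OF _ assms(1,2)])

lemma sup_Lagr_least:
  "x0 \<in> X \<Longrightarrow> (\<And>a. a \<in> Plans x0 \<Longrightarrow> Lagr a l \<gamma> x0 s0 \<le> c) \<Longrightarrow> sup_Lagr l \<gamma> x0 s0 \<le> c"
  unfolding sup_Lagr_def by (rule cSUP_least[OF Plans_not_empty])

lemma sup_Lagr_approx:
  assumes "x0 \<in> X" "0 < \<epsilon>"
  shows "\<exists>a\<in>Plans x0. sup_Lagr l \<gamma> x0 s0 - \<epsilon> < Lagr a l \<gamma> x0 s0"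
proof -
  have "sup_Lagr l \<gamma> x0 s0 - \<epsilon> < Sup ((\<lambda>a. Lagr a l \<gamma> x0 s0) ` Plans x0)"
    using assms(2) unfolding sup_Lagr_def by simp
  from less_cSupD[OF _ this] Plans_not_empty[OF assms(1)] show ?thesis
    by blast
qed

lemma sup_Lagr_ge:
  assumes "x0 \<in> X" "l \<in> Mults s0"
  shows "- flow_bound \<gamma> / (1 - \<beta>) \<le> sup_Lagr l \<gamma> x0 s0"
proof -
  obtain a where a: "feasible A p \<zeta> g gbar \<beta> P x0 s0 a"
    using feasible_exists assms(1) by blast
  have "- flow_bound \<gamma> / (1 - \<beta>) \<le> Lagr a l \<gamma> x0 s0"
    by (rule feasible_Lagr_ge[OF a assms])
  also have "\<dots> \<le> sup_Lagr l \<gamma> x0 s0"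
    by (rule sup_Lagr_upper[OF assms feasible_in_Plans[OF a]])
  finally show ?thesis .
qed

lemma bdd_below_sup_Lagr: "x0 \<in> X \<Longrightarrow> bdd_below ((\<lambda>l. sup_Lagr l \<gamma> x0 s0) ` Mults s0)"
  by (rule bdd_belowI2[where m = "- flow_bound \<gamma> / (1 - \<beta>)"]) (rule sup_Lagr_ge)

lemma Dual_le_sup_Lagr: "x0 \<in> X \<Longrightarrow> l \<in> Mults s0 \<Longrightarrow> Dual \<gamma> x0 s0 \<le> sup_Lagr l \<gamma> x0 s0"
  unfolding Dual_eq_INF_sup_Lagr by (rule cINF_lower[OF bdd_below_sup_Lagr])

lemma Dual_approx:
  assumes "x0 \<in> X" "0 < \<epsilon>"
  shows "\<exists>l\<in>Mults s0. sup_Lagr l \<gamma> x0 s0 < Dual \<gamma> x0 s0 + \<epsilon>"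
proof -
  have "Inf ((\<lambda>l. sup_Lagr l \<gamma> x0 s0) ` Mults s0) < Dual \<gamma> x0 s0 + \<epsilon>"
    using assms(2) unfolding Dual_eq_INF_sup_Lagr by simp
  from cInf_lessD[OF _ this] zero_in_Mults show ?thesis
    by blast
qed

section \<open>Splitting off the first period\<close>

lemma plans_Cons: "a \<in> Plans x \<Longrightarrow> (\<lambda>k. a (s # k)) \<in> Plans (\<zeta> x (a [s]) s)"
proof -
  assume a: "a \<in> Plans x"
  have "0 \<le> p (stateof \<zeta> (\<lambda>k. a (s # k)) (\<zeta> x (a [s]) s) h) (a (s # h)) (last h)" if "h \<noteq> []" for h
    using plans_p_nonneg[OF a, of "s # h"] that by (simp add: stateof_Cons)
  then show ?thesis
    using a unfolding plans_def by auto
qed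

lemma next_state_in_X: "a \<in> Plans x \<Longrightarrow> x \<in> X \<Longrightarrow> \<zeta> x (a [s]) s \<in> X"
  using \<zeta>_in_X plans_in_A[of a x "[s]"] by auto

lemma histprob_Cons_ge: "sh \<noteq> [] \<Longrightarrow> P s s1 * histprob P s1 sh \<le> histprob P s (s # sh)"
  using P_nonneg prob_path_nonneg[OF P_nonneg]
  by (cases sh) (auto simp: histprob_def)

lemma mult_mass_tail_le:
  assumes l: "l \<in> Mults s" and a0: "a0 \<in> A"
  shows "\<beta> * P s s1 * mult_mass (\<lambda>q. l ((s, a0) # fst q, snd q)) s1 t \<le> mult_mass l s (Suc t)"
proof -
  define \<iota> where "\<iota> k = Hset_Cons (s, a0, k)" for k
  define \<psi> where "\<psi> h = (\<Sum>i\<in>UNIV. \<beta> ^ Suc t * l h i * histprob P s (shocks h))" for h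
  have "\<beta> * P s s1 * mult_mass (\<lambda>q. l ((s, a0) # fst q, snd q)) s1 t
      = (\<Sum>k\<in>Hset A t. \<Sum>i\<in>UNIV. \<beta> * P s s1 * (\<beta> ^ t * l (\<iota> k) i * histprob P s1 (shocks k)))"
    unfolding mult_mass_def \<iota>_def Hset_Cons_def by (simp add: sum_distrib_left)
  also have "\<dots> \<le> (\<Sum>k\<in>Hset A t. \<psi> (\<iota> k))"
    unfolding \<psi>_def
  proof (intro sum_mono)
    fix k i
    have "P s s1 * histprob P s1 (shocks k) \<le> histprob P s (shocks (\<iota> k))"
      unfolding \<iota>_def shocks_Hset_Cons by (rule histprob_Cons_ge[OF shocks_not_Nil])
    from mult_left_mono[OF this, of "\<beta> ^ Suc t * l (\<iota> k) i"]
    show "\<beta> * P s s1 * (\<beta> ^ t * l (\<iota> k) i * histprob P s1 (shocks k))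
        \<le> \<beta> ^ Suc t * l (\<iota> k) i * histprob P s (shocks (\<iota> k))"
      using Mults_nonneg[OF l] beta_nonneg by (simp add: mult_ac)
  qed
  also have "\<dots> = (\<Sum>h\<in>\<iota> ` Hset A t. \<psi> h)"
    by (rule sum.reindex[symmetric, unfolded comp_def])
       (auto simp: \<iota>_def intro!: inj_onI dest: injD[OF inj_Hset_Cons])
  also have "\<dots> \<le> (\<Sum>h\<in>Hset A (Suc t). \<psi> h)"
  proof (rule sum_mono2[OF finite_Hset[OF finite_A]])
    show "\<iota> ` Hset A t \<subseteq> Hset A (Suc t)"
      unfolding Hset_Suc \<iota>_def using a0 by auto
    show "0 \<le> \<psi> h" for h
      unfolding \<psi>_def
      by (intro sum_nonneg mult_nonneg_nonneg zero_le_power beta_nonneg Mults_nonneg[OF l] histprob_nonneg)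
  qed
  finally show ?thesis
    unfolding mult_mass_def \<psi>_def .
qed

lemma Mults_Cons:
  assumes l: "l \<in> Mults s" and a0: "a0 \<in> A"
  shows "(\<lambda>q. l ((s, a0) # fst q, snd q)) \<in> Mults s1"
proof (rule MultsI)
  show "0 \<le> l ((s, a0) # fst h, snd h) i" for h i
    by (rule Mults_nonneg[OF l])
  have pos: "0 < \<beta> * P s s1"
    using beta_pos P_pos by simp
  have "summable (\<lambda>t. mult_mass l s (Suc t) / (\<beta> * P s s1))"
    using summable_mult_mass[OF l] by (simp add: summable_Suc_iff summable_divide)
  then show "summable (mult_mass (\<lambda>q. l ((s, a0) # fst q, snd q)) s1)"
  proof (rule summable_comparison_test'[where N = 0])
    fix t
    have "mult_mass (\<lambda>q. l ((s, a0) # fst q, snd q)) s1 t \<le> mult_mass l s (Suc t) / (\<beta> * P s s1)"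
      using mult_mass_tail_le[OF l a0, of s1 t] pos by (simp add: field_simps)
    moreover have "0 \<le> mult_mass (\<lambda>q. l ((s, a0) # fst q, snd q)) s1 t"
      by (rule mult_mass_nonneg) (rule Mults_nonneg[OF l])
    ultimately show "norm (mult_mass (\<lambda>q. l ((s, a0) # fst q, snd q)) s1 t)
        \<le> mult_mass l s (Suc t) / (\<beta> * P s s1)"
      by simp
  qed
qed

lemma constr_flow_Cons:
  "h \<noteq> [] \<Longrightarrow> constr_flow i a x (s # h) = constr_flow i (\<lambda>k. a (s # k)) (\<zeta> x (a [s]) s) h"
  unfolding constr_flow_def by (simp add: stateof_Cons)

lemma lag_flow_Cons:
  assumes "h \<noteq> []"
  shows "lag_flow a l \<gamma> x (s # h)
    = lag_flow (\<lambda>k. a (s # k)) (\<lambda>q. l ((s, a [s]) # fst q, snd q)) \<gamma> (\<zeta> x (a [s]) s) h"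
proof -
  have "disc \<beta> P (s # h) (constr_flow i a x) = disc \<beta> P h (constr_flow i (\<lambda>k. a (s # k)) (\<zeta> x (a [s]) s))"
    for i
    unfolding disc_Cons[OF assms] by (rule disc_cong) (simp add: constr_flow_Cons assms)
  then show ?thesis
    unfolding lag_flow_def constr_flow_Cons[OF assms] using assms by (simp add: stateof_Cons histgen_Cons)
qed

lemma lag_flow_singleton:
  "lag_flow a l \<gamma> x [s] = r x (a [s]) s + (\<Sum>i\<in>UNIV. \<gamma> i * g i x (a [s]) s)
     + (\<Sum>i\<in>UNIV. l ([], s) i * (disc \<beta> P [s] (constr_flow i a x) - gbar i))"
  unfolding lag_flow_def constr_flow_def by (simp add: stateof_singleton histgen_singleton)

lemma summable_constr_flow:
  "a \<in> Plans x0 \<Longrightarrow> x0 \<in> X \<Longrightarrow> summable (\<lambda>n. \<beta> ^ n * Eh P [s] n (constr_flow i a x0))"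
  by (rule disc_summable[OF P_nonneg P_sum beta_nonneg beta_less_1, of _ _ Bg])
     (rule constr_flow_bound, simp_all)

lemma disc_constr_flow_singleton:
  assumes "a \<in> Plans x" "x \<in> X"
  shows "disc \<beta> P [s] (constr_flow i a x) = g i x (a [s]) s
     + \<beta> * (\<Sum>s1\<in>UNIV. P s s1 * disc \<beta> P [s1] (constr_flow i (\<lambda>k. a (s # k)) (\<zeta> x (a [s]) s)))"
proof -
  have tail: "Eh P [s1] n (\<lambda>h. constr_flow i a x (s # h))
      = Eh P [s1] n (constr_flow i (\<lambda>k. a (s # k)) (\<zeta> x (a [s]) s))" for s1 n
    by (rule Eh_cong) (simp add: constr_flow_Cons)
  have "disc \<beta> P [s] (constr_flow i a x) = constr_flow i a x [s]
      + \<beta> * (\<Sum>s1\<in>UNIV. P s s1 * disc \<beta> P [s1] (constr_flow i (\<lambda>k. a (s # k)) (\<zeta> x (a [s]) s)))"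
    unfolding disc_def tail[symmetric]
    by (rule suminf_Eh_head)
       (simp_all add: tail summable_constr_flow assms plans_Cons next_state_in_X)
  then show ?thesis
    by (simp add: constr_flow_def stateof_singleton)
qed

lemma Lagr_weight_add:
  assumes a: "a \<in> Plans x0" and x0: "x0 \<in> X" and l: "l \<in> Mults s"
  shows "Lagr a l (\<lambda>i. \<gamma> i + w i) x0 s
    = Lagr a l \<gamma> x0 s + (\<Sum>i\<in>UNIV. w i * disc \<beta> P [s] (constr_flow i a x0))"
proof -
  let ?c = "\<lambda>i t. w i * (\<beta> ^ t * Eh P [s] t (constr_flow i a x0))"
  have c: "summable (?c i)" for i
    by (rule summable_mult) (rule summable_constr_flow[OF a x0])
  have "\<beta> ^ t * Eh P [s] t (lag_flow a l (\<lambda>i. \<gamma> i + w i) x0)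
      = \<beta> ^ t * Eh P [s] t (lag_flow a l \<gamma> x0) + (\<Sum>i\<in>UNIV. ?c i t)" for t
    unfolding lag_flow_def
    by (simp add: distrib_right sum.distrib Eh_add Eh_sum Eh_cmult distrib_left sum_distrib_left
        mult.left_commute)
  then have "Lagr a l (\<lambda>i. \<gamma> i + w i) x0 s = Lagr a l \<gamma> x0 s + (\<Sum>t. \<Sum>i\<in>UNIV. ?c i t)"
    unfolding Lagr_eq_suminf
    by (simp add: suminf_add[OF summable_Lagr_terms[OF a x0 l] summable_sum[OF c]])
  also have "(\<Sum>t. \<Sum>i\<in>UNIV. ?c i t) = (\<Sum>i\<in>UNIV. w i * disc \<beta> P [s] (constr_flow i a x0))"
    unfolding disc_def by (simp add: suminf_sum[OF c] suminf_mult summable_constr_flow[OF a x0])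
  finally show ?thesis .
qed

lemma Lagr_unfold_head:
  assumes x: "x \<in> X" and a: "a \<in> Plans x" and l: "l \<in> Mults s"
  shows "Lagr a l \<gamma> x s = lag_flow a l \<gamma> x [s]
    + \<beta> * (\<Sum>s1\<in>UNIV. P s s1 * Lagr (\<lambda>k. a (s # k)) (\<lambda>q. l ((s, a [s]) # fst q, snd q)) \<gamma> (\<zeta> x (a [s]) s) s1)"
proof -
  let ?a' = "\<lambda>k. a (s # k)" and ?l' = "\<lambda>q. l ((s, a [s]) # fst q, snd q)" and ?x' = "\<zeta> x (a [s]) s"
  have tail: "Eh P [s1] n (\<lambda>h. lag_flow a l \<gamma> x (s # h)) = Eh P [s1] n (lag_flow ?a' ?l' \<gamma> ?x')" for s1 n
    by (rule Eh_cong) (simp add: lag_flow_Cons)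
  have l': "?l' \<in> Mults s1" for s1
    by (rule Mults_Cons[OF l plans_in_A[OF a]]) simp
  show ?thesis
    unfolding Lagr_eq_suminf tail[symmetric]
    by (rule suminf_Eh_head)
       (simp_all add: tail summable_Lagr_terms[OF a x l] summable_Lagr_terms[OF plans_Cons[OF a] next_state_in_X[OF a x] l'])
qed

lemma Lagr_first_period:
  assumes x: "x \<in> X" and a: "a \<in> Plans x" and l: "l \<in> Mults s"
  shows "Lagr a l \<gamma> x s = r x (a [s]) s
     + (\<Sum>i\<in>UNIV. \<gamma> i * g i x (a [s]) s + l ([], s) i * (g i x (a [s]) s - gbar i))
     + \<beta> * (\<Sum>s1\<in>UNIV. P s s1 * Lagr (\<lambda>k. a (s # k)) (\<lambda>q. l ((s, a [s]) # fst q, snd q))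
                                   (\<lambda>i. \<gamma> i + l ([], s) i) (\<zeta> x (a [s]) s) s1)"
proof -
  let ?a' = "\<lambda>k. a (s # k)" and ?x' = "\<zeta> x (a [s]) s" and ?l0 = "l ([], s)"
  let ?l' = "\<lambda>q. l ((s, a [s]) # fst q, snd q)"
  let ?D = "\<lambda>i s1. disc \<beta> P [s1] (constr_flow i ?a' ?x')"
  have l': "?l' \<in> Mults s1" for s1
    by (rule Mults_Cons[OF l plans_in_A[OF a]]) simp
  have "Lagr a l \<gamma> x s = r x (a [s]) s + (\<Sum>i\<in>UNIV. \<gamma> i * g i x (a [s]) s)
      + (\<Sum>i\<in>UNIV. ?l0 i * (g i x (a [s]) s + \<beta> * (\<Sum>s1\<in>UNIV. P s s1 * ?D i s1) - gbar i))
      + \<beta> * (\<Sum>s1\<in>UNIV. P s s1 * Lagr ?a' ?l' \<gamma> ?x' s1)"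
    unfolding Lagr_unfold_head[OF x a l] lag_flow_singleton disc_constr_flow_singleton[OF a x] ..
  also have "\<dots> = r x (a [s]) s + (\<Sum>i\<in>UNIV. \<gamma> i * g i x (a [s]) s + ?l0 i * (g i x (a [s]) s - gbar i))
      + \<beta> * (\<Sum>s1\<in>UNIV. P s s1 * (Lagr ?a' ?l' \<gamma> ?x' s1 + (\<Sum>i\<in>UNIV. ?l0 i * ?D i s1)))"
    unfolding sum_weighted_discounted_expectation by (simp add: sum.distrib distrib_left)
  also have "\<dots> = r x (a [s]) s + (\<Sum>i\<in>UNIV. \<gamma> i * g i x (a [s]) s + ?l0 i * (g i x (a [s]) s - gbar i))
      + \<beta> * (\<Sum>s1\<in>UNIV. P s s1 * Lagr ?a' ?l' (\<lambda>i. \<gamma> i + ?l0 i) ?x' s1)"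
    by (simp add: Lagr_weight_add[OF plans_Cons[OF a] next_state_in_X[OF a x] l'])
  finally show ?thesis .
qed

section \<open>Pasting plans and multipliers\<close>

lemma lag_flow_cong_plan:
  assumes ab: "\<And>h. h \<noteq> [] \<Longrightarrow> hd h = s0 \<Longrightarrow> a h = b h" and h: "h \<noteq> []" "hd h = s0"
  shows "lag_flow a l \<gamma> x0 h = lag_flow b l \<gamma> x0 h"
proof -
  have state: "stateof \<zeta> a x0 k = stateof \<zeta> b x0 k" if "k \<noteq> []" "hd k = s0" for k
    by (rule stateof_cong_hd) (use ab that in auto)
  have "constr_flow i a x0 (h @ e) = constr_flow i b x0 (h @ e)" for i e
    unfolding constr_flow_def using state[of "h @ e"] ab h by simp
  then have "disc \<beta> P h (constr_flow i a x0) = disc \<beta> P h (constr_flow i b x0)" for i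
    by (rule disc_cong)
  moreover have "histgen a h = histgen b h"
    by (rule histgen_cong_hd) (use ab h in auto)
  ultimately show ?thesis
    unfolding lag_flow_def constr_flow_def using state[OF h] ab h by simp
qed

lemma Lagr_cong_plan:
  assumes "\<And>h. h \<noteq> [] \<Longrightarrow> hd h = s0 \<Longrightarrow> a h = b h"
  shows "Lagr a l \<gamma> x0 s0 = Lagr b l \<gamma> x0 s0"
proof -
  have "Eh P [s0] t (lag_flow a l \<gamma> x0) = Eh P [s0] t (lag_flow b l \<gamma> x0)" for t
    by (rule Eh_cong) (rule lag_flow_cong_plan[OF assms], auto)
  then show ?thesis
    unfolding Lagr_eq_suminf by simp
qed

lemma Lagr_cong_mult:
  assumes "\<And>h. hd (shocks h) = s0 \<Longrightarrow> l h = l' h"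
  shows "Lagr a l \<gamma> x0 s0 = Lagr a l' \<gamma> x0 s0"
proof -
  have "lag_flow a l \<gamma> x0 ([s0] @ e) = lag_flow a l' \<gamma> x0 ([s0] @ e)" for e
    unfolding lag_flow_def using assms[of "histgen a (s0 # e)"] by (simp add: shocks_histgen)
  then have "Eh P [s0] t (lag_flow a l \<gamma> x0) = Eh P [s0] t (lag_flow a l' \<gamma> x0)" for t
    by (intro Eh_cong)
  then show ?thesis
    unfolding Lagr_eq_suminf by simp
qed

text \<open>The filler \<open>af\<close> serves only histories not starting with \<open>s\<close>, which the Lagrangian at
  \<open>s\<close> never sees; it keeps the pasted plan admissible there.\<close>

definition paste_plan :: "'s \<Rightarrow> 'a \<Rightarrow> ('s \<Rightarrow> 's list \<Rightarrow> 'a) \<Rightarrow> ('s list \<Rightarrow> 'a) \<Rightarrow> 's list \<Rightarrow> 'a" where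
  "paste_plan s a0 b af h =
    (if h = [s] then a0 else if h \<noteq> [] \<and> hd h = s then b (hd (tl h)) (tl h) else af h)"

lemma paste_plan_singleton: "paste_plan s a0 b af [s] = a0"
  by (simp add: paste_plan_def)

lemma paste_plan_Cons: "h \<noteq> [] \<Longrightarrow> paste_plan s a0 b af (s # h) = b (hd h) h"
  by (simp add: paste_plan_def)

lemma paste_plan_in_Plans:
  assumes x: "x \<in> X" and a0: "a0 \<in> A" "0 \<le> p x a0 s"
    and b: "\<And>s1. b s1 \<in> Plans (\<zeta> x a0 s)" and af: "af \<in> Plans x"
  shows "paste_plan s a0 b af \<in> Plans x"
  unfolding plans_def
proof (intro CollectI allI impI)
  fix h :: "'s list"
  assume h: "h \<noteq> []"
  let ?n = "paste_plan s a0 b af"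
  show "?n h \<in> A \<and> 0 \<le> p (stateof \<zeta> ?n x h) (?n h) (last h)"
  proof (cases "hd h = s")
    case True
    then obtain h' where hh: "h = s # h'"
      using h by (cases h) auto
    show ?thesis
    proof (cases "h' = []")
      case True
      then show ?thesis
        using hh a0 by (simp add: paste_plan_singleton stateof_singleton)
    next
      case False
      have "stateof \<zeta> ?n x h = stateof \<zeta> (\<lambda>k. ?n (s # k)) (\<zeta> x (?n [s]) s) h'"
        unfolding hh by (rule stateof_Cons[OF False])
      also have "\<dots> = stateof \<zeta> (b (hd h')) (\<zeta> x a0 s) h'"
        unfolding paste_plan_singleton by (rule stateof_cong_hd[OF False]) (simp add: paste_plan_Cons)
      finally show ?thesis
        using hh False plans_in_A[OF b, of h'] plans_p_nonneg[OF b, of h' "hd h'"]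
        by (simp add: paste_plan_Cons)
    qed
  next
    case False
    have agree: "?n k = af k" if "k \<noteq> []" "hd k = hd h" for k
      using that False by (auto simp: paste_plan_def)
    have "stateof \<zeta> ?n x h = stateof \<zeta> af x h"
      by (rule stateof_cong_hd[OF h agree])
    then show ?thesis
      using agree[OF h refl] plans_in_A[OF af h] plans_p_nonneg[OF af h] by simp
  qed
qed

text \<open>The first shock \<open>c\<close> of a history is ignored (starting from \<open>s\<close>, only \<open>c = s\<close> has positive
  probability), and multipliers following an action outside \<open>A\<close> are irrelevant and set to zero.\<close>

definition paste_mult :: "('i \<Rightarrow> real) \<Rightarrow> ('a \<Rightarrow> 's \<Rightarrow> (('s \<times> 'a) list \<times> 's) \<Rightarrow> 'i \<Rightarrow> real)
    \<Rightarrow> (('s \<times> 'a) list \<times> 's) \<Rightarrow> 'i \<Rightarrow> real" where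
  "paste_mult l0 m h = (case fst h of
      [] \<Rightarrow> l0
    | (c, b) # q \<Rightarrow> if b \<in> A then m b (hd (shocks (q, snd h))) (q, snd h) else (\<lambda>_. 0))"

lemma paste_mult_Nil: "paste_mult l0 m ([], s') = l0"
  by (simp add: paste_mult_def)

lemma paste_mult_Hset_Cons: "b \<in> A \<Longrightarrow> paste_mult l0 m (Hset_Cons (c, b, k)) = m b (hd (shocks k)) k"
  by (simp add: paste_mult_def Hset_Cons_def)

lemma histprob_Cons_le:
  "sh \<noteq> [] \<Longrightarrow> histprob P s (c # sh) \<le> (if c = s then histprob P (hd sh) sh else 0)"
proof (cases sh)
  case (Cons s1 rest)
  have "P s s1 * prob_path P s1 rest \<le> prob_path P s1 rest"
    by (rule mult_left_le_one_le[OF prob_path_nonneg[OF P_nonneg] _ P_le_1]) (use P_nonneg in auto)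
  then show ?thesis
    using Cons by (simp add: histprob_def)
qed simp

lemma paste_mult_term_le:
  assumes b: "b \<in> A" and m: "\<And>s1. m b s1 \<in> Mults s1"
  shows "(\<Sum>i\<in>UNIV. \<beta> ^ Suc t * paste_mult l0 m (Hset_Cons (c, b, k)) i * histprob P s (shocks (Hset_Cons (c, b, k))))
    \<le> (if c = s then \<beta> * (\<Sum>s1\<in>UNIV. \<Sum>i\<in>UNIV. \<beta> ^ t * m b s1 k i * histprob P s1 (shocks k)) else 0)"
proof -
  let ?s1 = "hd (shocks k)"
  have m_nonneg: "0 \<le> m b s1 k i" for s1 i
    by (rule Mults_nonneg[OF m])
  have "(\<Sum>i\<in>UNIV. \<beta> ^ Suc t * paste_mult l0 m (Hset_Cons (c, b, k)) i * histprob P s (shocks (Hset_Cons (c, b, k))))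
      \<le> (\<Sum>i\<in>UNIV. \<beta> ^ Suc t * m b ?s1 k i * (if c = s then histprob P ?s1 (shocks k) else 0))"
    unfolding paste_mult_Hset_Cons[OF b] shocks_Hset_Cons
    by (intro sum_mono mult_left_mono histprob_Cons_le shocks_not_Nil mult_nonneg_nonneg zero_le_power
        beta_nonneg m_nonneg)
  also have "\<dots> = (if c = s then \<beta> * (\<Sum>i\<in>UNIV. \<beta> ^ t * m b ?s1 k i * histprob P ?s1 (shocks k)) else 0)"
    by (simp add: sum_distrib_left mult_ac)
  also have "\<dots> \<le> (if c = s then \<beta> * (\<Sum>s1\<in>UNIV. \<Sum>i\<in>UNIV. \<beta> ^ t * m b s1 k i * histprob P s1 (shocks k)) else 0)"
    by (auto intro!: mult_left_mono[OF _ beta_nonneg] member_le_sum sum_nonneg mult_nonneg_nonneg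
        zero_le_power beta_nonneg m_nonneg histprob_nonneg)
  finally show ?thesis .
qed

lemma mult_mass_paste_mult_Suc_le:
  assumes m: "\<And>b s1. b \<in> A \<Longrightarrow> m b s1 \<in> Mults s1"
  shows "mult_mass (paste_mult l0 m) s (Suc t) \<le> \<beta> * (\<Sum>b\<in>A. \<Sum>s1\<in>UNIV. mult_mass (m b s1) s1 t)"
proof -
  define \<psi> where "\<psi> h = (\<Sum>i\<in>UNIV. \<beta> ^ Suc t * paste_mult l0 m h i * histprob P s (shocks h))" for h
  let ?W = "\<lambda>b k. \<Sum>s1\<in>UNIV. \<Sum>i\<in>UNIV. \<beta> ^ t * m b s1 k i * histprob P s1 (shocks k)"
  have "mult_mass (paste_mult l0 m) s (Suc t) = (\<Sum>h\<in>Hset_Cons ` (UNIV \<times> A \<times> Hset A t). \<psi> h)"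
    unfolding mult_mass_def Hset_Suc \<psi>_def ..
  also have "\<dots> = (\<Sum>cbk\<in>UNIV \<times> A \<times> Hset A t. \<psi> (Hset_Cons cbk))"
    by (rule sum.reindex[OF inj_on_subset[OF inj_Hset_Cons subset_UNIV], unfolded comp_def])
  also have "\<dots> = (\<Sum>c\<in>UNIV. \<Sum>b\<in>A. \<Sum>k\<in>Hset A t. \<psi> (Hset_Cons (c, b, k)))"
    by (simp add: sum.cartesian_product)
  also have "\<dots> \<le> (\<Sum>c\<in>UNIV. \<Sum>b\<in>A. \<Sum>k\<in>Hset A t. if c = s then \<beta> * ?W b k else 0)"
    unfolding \<psi>_def by (intro sum_mono paste_mult_term_le m) simp
  also have "\<dots> = (\<Sum>b\<in>A. \<Sum>k\<in>Hset A t. \<beta> * ?W b k)"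
  proof -
    have "(\<Sum>b\<in>A. \<Sum>k\<in>Hset A t. if c = s then \<beta> * ?W b k else 0)
        = (if c = s then \<Sum>b\<in>A. \<Sum>k\<in>Hset A t. \<beta> * ?W b k else 0)" for c
      by simp
    then show ?thesis
      by (simp only:) (simp add: sum.delta)
  qed
  also have "\<dots> = \<beta> * (\<Sum>b\<in>A. \<Sum>s1\<in>UNIV. mult_mass (m b s1) s1 t)"
    unfolding mult_mass_def by (simp add: sum_distrib_left sum.swap[of _ "Hset A t"])
  finally show ?thesis .
qed

lemma paste_mult_in_Mults:
  assumes l0: "\<And>i. 0 \<le> l0 i" and m: "\<And>b s1. b \<in> A \<Longrightarrow> m b s1 \<in> Mults s1"
  shows "paste_mult l0 m \<in> Mults s"
proof (rule MultsI)
  show nonneg: "0 \<le> paste_mult l0 m h i" for h i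
    unfolding paste_mult_def using l0 Mults_nonneg[OF m] by (auto split: list.split)
  have "summable (\<lambda>t. \<beta> * (\<Sum>b\<in>A. \<Sum>s1\<in>UNIV. mult_mass (m b s1) s1 t))"
    by (intro summable_mult summable_sum summable_mult_mass m)
  then have "summable (\<lambda>t. mult_mass (paste_mult l0 m) s (Suc t))"
    by (rule summable_comparison_test'[where N = 0])
       (simp add: mult_mass_nonneg[OF nonneg] mult_mass_paste_mult_Suc_le[OF m])
  then show "summable (mult_mass (paste_mult l0 m) s)"
    by (simp add: summable_Suc_iff)
qed

section \<open>The recursive dual\<close>

lemma discounted_expectation_mono:
  "(\<And>s1. f s1 \<le> f' s1) \<Longrightarrow> \<beta> * (\<Sum>s1\<in>UNIV. P s s1 * f s1) \<le> \<beta> * (\<Sum>s1\<in>UNIV. P s s1 * f' s1)"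
  using P_nonneg beta_nonneg by (intro mult_left_mono sum_mono) auto

lemma expectation_add_const: "(\<Sum>s1\<in>UNIV. P s s1 * (f s1 + c)) = (\<Sum>s1\<in>UNIV. P s s1 * f s1) + c"
  using P_sum by (simp add: distrib_left sum.distrib sum_distrib_right[symmetric])

definition bellman_term :: "('i \<Rightarrow> real) \<Rightarrow> 'x \<Rightarrow> 's \<Rightarrow> ('i \<Rightarrow> real) \<Rightarrow> 'a \<Rightarrow> real" where
  "bellman_term \<gamma> x s l0 a0 = r x a0 s + (\<Sum>i\<in>UNIV. \<gamma> i * g i x a0 s + l0 i * (g i x a0 s - gbar i))
     + \<beta> * (\<Sum>s'\<in>UNIV. P s s' * Dual (\<lambda>i. \<gamma> i + l0 i) (\<zeta> x a0 s) s')"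

definition bellman_sup :: "('i \<Rightarrow> real) \<Rightarrow> 'x \<Rightarrow> 's \<Rightarrow> ('i \<Rightarrow> real) \<Rightarrow> real" where
  "bellman_sup \<gamma> x s l0 = (SUP a0\<in>{a\<in>A. 0 \<le> p x a s}. bellman_term \<gamma> x s l0 a0)"

lemma first_action_admissible: "a \<in> Plans x \<Longrightarrow> a [s] \<in> {b\<in>A. 0 \<le> p x b s}"
  using plans_in_A[of a x "[s]"] plans_p_nonneg[of a x "[s]"] by (simp add: stateof_singleton)

lemma bellman_term_le_sup:
  "a0 \<in> {a\<in>A. 0 \<le> p x a s} \<Longrightarrow> bellman_term \<gamma> x s l0 a0 \<le> bellman_sup \<gamma> x s l0"
  unfolding bellman_sup_def using finite_A by (intro cSUP_upper bdd_above_finite finite_imageI) auto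

lemma bellman_sup_least:
  assumes "x \<in> X" "\<And>a0. a0 \<in> {a\<in>A. 0 \<le> p x a s} \<Longrightarrow> bellman_term \<gamma> x s l0 a0 \<le> c"
  shows "bellman_sup \<gamma> x s l0 \<le> c"
proof -
  obtain a where "a \<in> Plans x"
    using Plans_not_empty[OF assms(1)] by blast
  then have "{a\<in>A. 0 \<le> p x a s} \<noteq> {}"
    using first_action_admissible by blast
  then show ?thesis
    unfolding bellman_sup_def by (rule cSUP_least) (rule assms(2))
qed

lemma Lagr_paste_mult_le:
  assumes x: "x \<in> X" and a: "a \<in> Plans x"
    and m: "\<And>b s1. b \<in> A \<Longrightarrow> m b s1 \<in> Mults s1"
    and m_approx: "\<And>b s1. b \<in> A \<Longrightarrow>
      sup_Lagr (m b s1) (\<lambda>i. \<gamma> i + l0 i) (\<zeta> x b s) s1 \<le> Dual (\<lambda>i. \<gamma> i + l0 i) (\<zeta> x b s) s1 + \<epsilon>"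
    and l: "paste_mult l0 m \<in> Mults s"
  shows "Lagr a (paste_mult l0 m) \<gamma> x s \<le> bellman_sup \<gamma> x s l0 + \<beta> * \<epsilon>"
proof -
  let ?a0 = "a [s]" and ?\<gamma>' = "\<lambda>i. \<gamma> i + l0 i"
  have a0: "?a0 \<in> A"
    by (rule plans_in_A[OF a]) simp
  have tail: "Lagr (\<lambda>k. a (s # k)) (\<lambda>q. paste_mult l0 m ((s, ?a0) # fst q, snd q)) ?\<gamma>' (\<zeta> x ?a0 s) s1
      \<le> Dual ?\<gamma>' (\<zeta> x ?a0 s) s1 + \<epsilon>" for s1
  proof -
    have "Lagr (\<lambda>k. a (s # k)) (\<lambda>q. paste_mult l0 m ((s, ?a0) # fst q, snd q)) ?\<gamma>' (\<zeta> x ?a0 s) s1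
        = Lagr (\<lambda>k. a (s # k)) (m ?a0 s1) ?\<gamma>' (\<zeta> x ?a0 s) s1"
      by (rule Lagr_cong_mult) (use paste_mult_Hset_Cons[OF a0, of l0 m s] in \<open>simp add: Hset_Cons_def\<close>)
    also have "\<dots> \<le> sup_Lagr (m ?a0 s1) ?\<gamma>' (\<zeta> x ?a0 s) s1"
      by (rule sup_Lagr_upper[OF next_state_in_X[OF a x] m[OF a0] plans_Cons[OF a]])
    also have "\<dots> \<le> Dual ?\<gamma>' (\<zeta> x ?a0 s) s1 + \<epsilon>"
      by (rule m_approx[OF a0])
    finally show ?thesis .
  qed
  have "Lagr a (paste_mult l0 m) \<gamma> x s \<le> r x ?a0 s + (\<Sum>i\<in>UNIV. \<gamma> i * g i x ?a0 s + l0 i * (g i x ?a0 s - gbar i))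
      + \<beta> * (\<Sum>s1\<in>UNIV. P s s1 * (Dual ?\<gamma>' (\<zeta> x ?a0 s) s1 + \<epsilon>))"
    unfolding Lagr_first_period[OF x a l] paste_mult_Nil
    by (intro add_left_mono discounted_expectation_mono tail)
  also have "\<dots> = bellman_term \<gamma> x s l0 ?a0 + \<beta> * \<epsilon>"
    unfolding bellman_term_def expectation_add_const by (simp add: distrib_left)
  also have "\<dots> \<le> bellman_sup \<gamma> x s l0 + \<beta> * \<epsilon>"
    using bellman_term_le_sup[OF first_action_admissible[OF a]] by simp
  finally show ?thesis .
qed

lemma Dual_le_bellman_sup:
  assumes x: "x \<in> X" and l0: "\<And>i. 0 \<le> l0 i"
  shows "Dual \<gamma> x s \<le> bellman_sup \<gamma> x s l0"
proof (rule field_le_epsilon)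
  fix \<epsilon> :: real
  assume \<epsilon>: "0 < \<epsilon>"
  let ?\<gamma>' = "\<lambda>i. \<gamma> i + l0 i"
  define m where "m b s1 = (SOME l. l \<in> Mults s1 \<and> sup_Lagr l ?\<gamma>' (\<zeta> x b s) s1 < Dual ?\<gamma>' (\<zeta> x b s) s1 + \<epsilon>)"
    for b s1
  have m: "m b s1 \<in> Mults s1 \<and> sup_Lagr (m b s1) ?\<gamma>' (\<zeta> x b s) s1 < Dual ?\<gamma>' (\<zeta> x b s) s1 + \<epsilon>"
    if b: "b \<in> A" for b s1
  proof -
    have "\<zeta> x b s \<in> X"
      using \<zeta>_in_X x b by blast
    then have "\<exists>l. l \<in> Mults s1 \<and> sup_Lagr l ?\<gamma>' (\<zeta> x b s) s1 < Dual ?\<gamma>' (\<zeta> x b s) s1 + \<epsilon>"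
      using Dual_approx[OF _ \<epsilon>] by blast
    then show ?thesis
      unfolding m_def by (rule someI_ex)
  qed
  have m_in: "m b s1 \<in> Mults s1" and m_le: "sup_Lagr (m b s1) ?\<gamma>' (\<zeta> x b s) s1 \<le> Dual ?\<gamma>' (\<zeta> x b s) s1 + \<epsilon>"
    if "b \<in> A" for b s1
    using m[OF that, of s1] by simp_all
  have pm: "paste_mult l0 m \<in> Mults s"
    by (rule paste_mult_in_Mults[OF l0 m_in])
  have "Dual \<gamma> x s \<le> sup_Lagr (paste_mult l0 m) \<gamma> x s"
    by (rule Dual_le_sup_Lagr[OF x pm])
  also have "\<dots> \<le> bellman_sup \<gamma> x s l0 + \<beta> * \<epsilon>"
  proof (rule sup_Lagr_least[OF x])
    fix a
    assume "a \<in> Plans x"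
    then show "Lagr a (paste_mult l0 m) \<gamma> x s \<le> bellman_sup \<gamma> x s l0 + \<beta> * \<epsilon>"
      by (rule Lagr_paste_mult_le[OF x _ m_in m_le pm])
  qed
  also have "\<dots> \<le> bellman_sup \<gamma> x s l0 + \<epsilon>"
    using discount_le[of \<epsilon>] \<epsilon> by simp
  finally show "Dual \<gamma> x s \<le> bellman_sup \<gamma> x s l0 + \<epsilon>" .
qed

lemma bellman_term_le_Lagr_paste_plan:
  assumes x: "x \<in> X" and l: "l \<in> Mults s" and a0: "a0 \<in> A" "0 \<le> p x a0 s"
    and b: "\<And>s1. b s1 \<in> Plans (\<zeta> x a0 s)"
    and b_approx: "\<And>s1. sup_Lagr (\<lambda>q. l ((s, a0) # fst q, snd q)) (\<lambda>i. \<gamma> i + l ([], s) i) (\<zeta> x a0 s) s1 - \<epsilon>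
      \<le> Lagr (b s1) (\<lambda>q. l ((s, a0) # fst q, snd q)) (\<lambda>i. \<gamma> i + l ([], s) i) (\<zeta> x a0 s) s1"
    and af: "af \<in> Plans x"
  shows "bellman_term \<gamma> x s (l ([], s)) a0 - \<beta> * \<epsilon> \<le> Lagr (paste_plan s a0 b af) l \<gamma> x s"
proof -
  let ?a = "paste_plan s a0 b af" and ?\<gamma>' = "\<lambda>i. \<gamma> i + l ([], s) i"
  let ?l' = "\<lambda>q. l ((s, a0) # fst q, snd q)"
  have a: "?a \<in> Plans x"
    by (rule paste_plan_in_Plans[OF x a0 b af])
  have tail: "Dual ?\<gamma>' (\<zeta> x a0 s) s1 - \<epsilon> \<le> Lagr (\<lambda>k. ?a (s # k)) ?l' ?\<gamma>' (\<zeta> x a0 s) s1" for s1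
  proof -
    have "Dual ?\<gamma>' (\<zeta> x a0 s) s1 \<le> sup_Lagr ?l' ?\<gamma>' (\<zeta> x a0 s) s1"
      by (rule Dual_le_sup_Lagr[OF _ Mults_Cons[OF l a0(1)]]) (use \<zeta>_in_X x a0 in blast)
    also have "sup_Lagr ?l' ?\<gamma>' (\<zeta> x a0 s) s1 - \<epsilon> \<le> Lagr (b s1) ?l' ?\<gamma>' (\<zeta> x a0 s) s1"
      by (rule b_approx)
    also have "Lagr (b s1) ?l' ?\<gamma>' (\<zeta> x a0 s) s1 = Lagr (\<lambda>k. ?a (s # k)) ?l' ?\<gamma>' (\<zeta> x a0 s) s1"
      by (rule Lagr_cong_plan) (simp add: paste_plan_Cons)
    finally show ?thesis
      by simp
  qed
  have "bellman_term \<gamma> x s (l ([], s)) a0 - \<beta> * \<epsilon>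
      = r x a0 s + (\<Sum>i\<in>UNIV. \<gamma> i * g i x a0 s + l ([], s) i * (g i x a0 s - gbar i))
        + \<beta> * (\<Sum>s1\<in>UNIV. P s s1 * (Dual ?\<gamma>' (\<zeta> x a0 s) s1 + - \<epsilon>))"
    unfolding bellman_term_def expectation_add_const by (simp add: algebra_simps)
  also have "\<dots> \<le> r x a0 s + (\<Sum>i\<in>UNIV. \<gamma> i * g i x a0 s + l ([], s) i * (g i x a0 s - gbar i))
        + \<beta> * (\<Sum>s1\<in>UNIV. P s s1 * Lagr (\<lambda>k. ?a (s # k)) ?l' ?\<gamma>' (\<zeta> x a0 s) s1)"
    using tail by (intro add_left_mono discounted_expectation_mono) simp
  also have "\<dots> = Lagr ?a l \<gamma> x s"
    using Lagr_first_period[OF x a l, of \<gamma>] by (simp add: paste_plan_singleton)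
  finally show ?thesis .
qed

lemma bellman_sup_le_sup_Lagr:
  assumes x: "x \<in> X" and l: "l \<in> Mults s"
  shows "bellman_sup \<gamma> x s (l ([], s)) \<le> sup_Lagr l \<gamma> x s"
proof (rule bellman_sup_least[OF x])
  fix a0
  assume a0: "a0 \<in> {a\<in>A. 0 \<le> p x a s}"
  let ?x' = "\<zeta> x a0 s" and ?\<gamma>' = "\<lambda>i. \<gamma> i + l ([], s) i" and ?l' = "\<lambda>q. l ((s, a0) # fst q, snd q)"
  have x': "?x' \<in> X"
    using \<zeta>_in_X x a0 by blast
  show "bellman_term \<gamma> x s (l ([], s)) a0 \<le> sup_Lagr l \<gamma> x s"
  proof (rule field_le_epsilon)
    fix \<epsilon> :: real
    assume \<epsilon>: "0 < \<epsilon>"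
    define b where "b s1 = (SOME b. b \<in> Plans ?x' \<and> sup_Lagr ?l' ?\<gamma>' ?x' s1 - \<epsilon> < Lagr b ?l' ?\<gamma>' ?x' s1)" for s1
    have b: "b s1 \<in> Plans ?x' \<and> sup_Lagr ?l' ?\<gamma>' ?x' s1 - \<epsilon> < Lagr (b s1) ?l' ?\<gamma>' ?x' s1" for s1
    proof -
      have "\<exists>b. b \<in> Plans ?x' \<and> sup_Lagr ?l' ?\<gamma>' ?x' s1 - \<epsilon> < Lagr b ?l' ?\<gamma>' ?x' s1"
        using sup_Lagr_approx[OF x' \<epsilon>] by blast
      then show ?thesis
        unfolding b_def by (rule someI_ex)
    qed
    obtain af where af: "af \<in> Plans x"
      using Plans_not_empty[OF x] by blast
    have "bellman_term \<gamma> x s (l ([], s)) a0 - \<beta> * \<epsilon> \<le> Lagr (paste_plan s a0 b af) l \<gamma> x s"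
      by (rule bellman_term_le_Lagr_paste_plan[OF x l _ _ _ _ af]) (use a0 b in \<open>auto intro: less_imp_le\<close>)
    also have "\<dots> \<le> sup_Lagr l \<gamma> x s"
      by (rule sup_Lagr_upper[OF x l paste_plan_in_Plans[OF x _ _ _ af]]) (use a0 b in auto)
    finally show "bellman_term \<gamma> x s (l ([], s)) a0 \<le> sup_Lagr l \<gamma> x s + \<epsilon>"
      using discount_le[of \<epsilon>] \<epsilon> by linarith
  qed
qed

theorem Dual_eq_bellman:
  assumes x: "x \<in> X"
  shows "Dual \<gamma> x s = (INF l0\<in>{l0. \<forall>i. 0 \<le> l0 i}. bellman_sup \<gamma> x s l0)"
proof (rule antisym)
  show "Dual \<gamma> x s \<le> (INF l0\<in>{l0. \<forall>i. 0 \<le> l0 i}. bellman_sup \<gamma> x s l0)"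
    by (rule cINF_greatest) (auto intro: Dual_le_bellman_sup[OF x])
  have bdd: "bdd_below ((\<lambda>l0. bellman_sup \<gamma> x s l0) ` {l0. \<forall>i. 0 \<le> l0 i})"
    by (rule bdd_belowI2[where m = "Dual \<gamma> x s"]) (auto intro: Dual_le_bellman_sup[OF x])
  show "(INF l0\<in>{l0. \<forall>i. 0 \<le> l0 i}. bellman_sup \<gamma> x s l0) \<le> Dual \<gamma> x s"
    unfolding Dual_eq_INF_sup_Lagr
  proof (rule cINF_greatest[OF Mults_not_empty])
    fix l
    assume l: "l \<in> Mults s"
    have "(INF l0\<in>{l0. \<forall>i. 0 \<le> l0 i}. bellman_sup \<gamma> x s l0) \<le> bellman_sup \<gamma> x s (l ([], s))"
      by (rule cINF_lower[OF bdd]) (simp add: Mults_nonneg[OF l])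
    also have "\<dots> \<le> sup_Lagr l \<gamma> x s"
      by (rule bellman_sup_le_sup_Lagr[OF x l])
    finally show "(INF l0\<in>{l0. \<forall>i. 0 \<le> l0 i}. bellman_sup \<gamma> x s l0) \<le> sup_Lagr l \<gamma> x s" .
  qed
qed

end

theorem theorem3p1:
  fixes A :: "'a set" and X :: "'x set"
    and P :: "'s::finite \<Rightarrow> 's \<Rightarrow> real"
    and \<zeta> :: "'x \<Rightarrow> 'a \<Rightarrow> 's \<Rightarrow> 'x" and p r :: "'x \<Rightarrow> 'a \<Rightarrow> 's \<Rightarrow> real"
    and g :: "'i::finite \<Rightarrow> 'x \<Rightarrow> 'a \<Rightarrow> 's \<Rightarrow> real" and gbar :: "'i \<Rightarrow> real"
    and \<beta> :: real and \<gamma> :: "'i \<Rightarrow> real" and x :: 'x and s :: 's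
  assumes "finite A"
    and "countable X"
    and "\<forall>s s'. 0 < P s s'"
    and "\<forall>s. (\<Sum>s'\<in>UNIV. P s s') = 1"
    and "\<forall>x\<in>X. \<forall>a\<in>A. \<forall>s. \<zeta> x a s \<in> X"
    and "\<exists>B. \<forall>x\<in>X. \<forall>a\<in>A. \<forall>s. \<bar>r x a s\<bar> \<le> B"
    and "\<forall>i. \<exists>B. \<forall>x\<in>X. \<forall>a\<in>A. \<forall>s. \<bar>g i x a s\<bar> \<le> B"
    and "0 < \<beta>" and "\<beta> < 1"
    and "\<forall>x0\<in>X. \<forall>s0. \<exists>a. feasible A p \<zeta> g gbar \<beta> P x0 s0 a"
    and "x \<in> X"
    and "\<forall>i. 0 \<le> \<gamma> i"
  shows "Dval A p r g gbar \<zeta> \<beta> P \<gamma> x s =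
    (INF l\<in>{l::'i \<Rightarrow> real. \<forall>i. 0 \<le> l i}.
       SUP a\<in>{a\<in>A. 0 \<le> p x a s}.
         r x a s + (\<Sum>i\<in>UNIV. \<gamma> i * g i x a s + l i * (g i x a s - gbar i))
         + \<beta> * (\<Sum>s'\<in>UNIV. P s s' * Dval A p r g gbar \<zeta> \<beta> P (\<lambda>i. \<gamma> i + l i) (\<zeta> x a s) s'))"
proof -
  obtain Br where Br: "\<forall>x\<in>X. \<forall>a\<in>A. \<forall>s. \<bar>r x a s\<bar> \<le> Br"
    using assms(6) by blast
  obtain Bi where Bi: "\<forall>i. \<forall>x\<in>X. \<forall>a\<in>A. \<forall>s. \<bar>g i x a s\<bar> \<le> Bi i"
    using assms(7) by metis
  interpret constrained_dp A X P \<zeta> p r g gbar \<beta> Br "\<Sum>i\<in>UNIV. \<bar>Bi i\<bar>"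
  proof
    fix i x a s
    assume "x \<in> X" "a \<in> A"
    then have "\<bar>g i x a s\<bar> \<le> Bi i"
      using Bi by blast
    also have "\<dots> \<le> (\<Sum>i\<in>UNIV. \<bar>Bi i\<bar>)"
      using member_le_sum[of i UNIV "\<lambda>i. \<bar>Bi i\<bar>"] by simp
    finally show "\<bar>g i x a s\<bar> \<le> (\<Sum>i\<in>UNIV. \<bar>Bi i\<bar>)" .
  qed (use assms Br in \<open>auto intro: sum_nonneg\<close>)
  show ?thesis
    using Dual_eq_bellman[OF assms(11), of \<gamma> s] unfolding bellman_sup_def bellman_term_def by simp
qed

end
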